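(* Let $\mathcal J_N$ be the ideal of the closed embedding $i_N=(\pi_N,\varphi_N):\mathcal M(N,K)\hookrightarrow L^-\mathrm{GL}_K\times L^-\mathrm{GL}_1$, and let $\Delta^N:R\to R^{\otimes N}$, $R=\mathbb C[L^-\mathrm{GL}_K\times L^-\mathrm{GL}_1]$, be the iterated coproduct (pullback along the $N$-fold group multiplication). Then $$\mathcal J_N=(\Delta^N)^{-1}\left(\sum_{i=1}^NR^{\otimes(i-1)}\otimes\mathcal J_1\otimes R^{\otimes(N-i)}\right).$$
   Context: $\mathcal M(N,K)=\mathrm{Rep}(N,K)/\!/\mathrm{GL}_N$, with $\mathrm{Rep}(N,K)$ the triples $(B,\psi,\overline\psi)$, $B\in\mathrm{Mat}_{N\times N}(\mathbb C)$, $\psi\in\mathrm{Mat}_{N\times K}$, $\overline\psi\in\mathrm{Mat}_{K\times N}$, and $g\cdot(B,\psi,\overline\psi)=(gBg^{-1},g\psi,\overline\psi g^{-1})$. $\widetilde B=B+\psi\overline\psi$. $L^-\mathrm{GL}_K$ is the group scheme of series $1+\sum_{i\ge1}g_iz^{-i}$, $g_i\in\mathfrak{gl}_K$ (similarly $L^-\mathrm{GL}_1$). $\pi_N(B,\psi,\overline\psi)=1+\overline\psi(z-\widetilde B/2)^{-1}\psi$ and $\varphi_N(B,\psi,\overline\psi)=z^{-N}\det(z-\widetilde B)$; $i_N$ is a closed embedding. *)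

theory Defs
  imports Complex_Main "Jordan_Normal_Form.Char_Poly"
begin

(* A point of L^-GL_K x L^-GL_1: (x, h), where x i a b is the (a,b) entry of the
   coefficient g_i of z^{-i} (i >= 1, a,b < K) and h i is the coefficient of z^{-i} (i >= 1).
   Coordinates with i = 0 or a,b >= K are junk and never used. *)
type_synonym point = "(nat \<Rightarrow> nat \<Rightarrow> nat \<Rightarrow> complex) \<times> (nat \<Rightarrow> complex)"

inductive_set polyfun :: "('p \<Rightarrow> complex) set \<Rightarrow> ('p \<Rightarrow> complex) set" for C where
  pf_const: "(\<lambda>_. c) \<in> polyfun C"
| pf_coord: "f \<in> C \<Longrightarrow> f \<in> polyfun C"
| pf_add: "f \<in> polyfun C \<Longrightarrow> g \<in> polyfun C \<Longrightarrow> (\<lambda>p. f p + g p) \<in> polyfun C"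
| pf_mult: "f \<in> polyfun C \<Longrightarrow> g \<in> polyfun C \<Longrightarrow> (\<lambda>p. f p * g p) \<in> polyfun C"

inductive_set ideal_gen :: "('p \<Rightarrow> complex) set \<Rightarrow> ('p \<Rightarrow> complex) set \<Rightarrow> ('p \<Rightarrow> complex) set"
  for A S where
  ig_zero: "(\<lambda>_. 0) \<in> ideal_gen A S"
| ig_mult: "r \<in> A \<Longrightarrow> s \<in> S \<Longrightarrow> (\<lambda>p. r p * s p) \<in> ideal_gen A S"
| ig_add: "f \<in> ideal_gen A S \<Longrightarrow> g \<in> ideal_gen A S \<Longrightarrow> (\<lambda>p. f p + g p) \<in> ideal_gen A S"

definition coordsR :: "nat \<Rightarrow> (point \<Rightarrow> complex) set" where
  "coordsR K = {(\<lambda>(x,h). x i a b) | i a b. 1 \<le> i \<and> a < K \<and> b < K}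
             \<union> {(\<lambda>(x,h). h i) | i. 1 \<le> i}"

definition ringR :: "nat \<Rightarrow> (point \<Rightarrow> complex) set" where
  "ringR K = polyfun (coordsR K)"

definition coordsN :: "nat \<Rightarrow> nat \<Rightarrow> ((nat \<Rightarrow> point) \<Rightarrow> complex) set" where
  "coordsN K N = {(\<lambda>P. c (P j)) | c j. c \<in> coordsR K \<and> j < N}"

(* R^{\<otimes> N}, realized as polynomial functions on the N-fold product *)
definition ringRN :: "nat \<Rightarrow> nat \<Rightarrow> ((nat \<Rightarrow> point) \<Rightarrow> complex) set" where
  "ringRN K N = polyfun (coordsN K N)"

definition serK :: "(nat \<Rightarrow> nat \<Rightarrow> nat \<Rightarrow> complex) \<Rightarrow> nat \<Rightarrow> nat \<Rightarrow> nat \<Rightarrow> complex" where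
  "serK x i a b = (if i = 0 then (if a = b then 1 else 0) else x i a b)"

definition ser1 :: "(nat \<Rightarrow> complex) \<Rightarrow> nat \<Rightarrow> complex" where
  "ser1 h i = (if i = 0 then 1 else h i)"

definition mulG :: "nat \<Rightarrow> point \<Rightarrow> point \<Rightarrow> point" where
  "mulG K p q = (case p of (x,h) \<Rightarrow> case q of (y,k) \<Rightarrow>
     ((\<lambda>n a b. \<Sum>i\<le>n. \<Sum>c<K. serK x i a c * serK y (n - i) c b),
      (\<lambda>n. \<Sum>i\<le>n. ser1 h i * ser1 k (n - i))))"

definition unitG :: point where
  "unitG = ((\<lambda>i a b. 0), (\<lambda>i. 0))"

primrec multN :: "nat \<Rightarrow> nat \<Rightarrow> (nat \<Rightarrow> point) \<Rightarrow> point" where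
  "multN K 0 P = unitG"
| "multN K (Suc n) P = mulG K (multN K n P) (P n)"

definition DeltaN :: "nat \<Rightarrow> nat \<Rightarrow> (point \<Rightarrow> complex) \<Rightarrow> ((nat \<Rightarrow> point) \<Rightarrow> complex)" where
  "DeltaN K N f = (\<lambda>P. f (multN K N P))"

definition Btil :: "complex mat \<Rightarrow> complex mat \<Rightarrow> complex mat \<Rightarrow> complex mat" where
  "Btil B psi psib = B + psi * psib"

(* pi_N = 1 + psib (z - Bt/2)^{-1} psi = 1 + sum_{i>=1} psib (Bt/2)^(i-1) psi z^{-i};
   phi_N = z^{-N} det(z - Bt) = sum_{i=0}^N coeff(charpoly Bt, N-i) z^{-i} *)
definition iN :: "nat \<Rightarrow> nat \<Rightarrow> complex mat \<Rightarrow> complex mat \<Rightarrow> complex mat \<Rightarrow> point" where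
  "iN N K B psi psib =
     ((\<lambda>i a b. if 1 \<le> i \<and> a < K \<and> b < K
               then (psib * (((1/2) \<cdot>\<^sub>m Btil B psi psib) ^\<^sub>m (i - 1)) * psi) $$ (a, b)
               else 0),
      (\<lambda>i. if i \<le> N then coeff (char_poly (Btil B psi psib)) (N - i) else 0))"

(* J_N: ideal of the closed embedding i_N, i.e. kernel of i_N^* : R -> C[M(N,K)];
   since C[M(N,K)] = C[Rep(N,K)]^{GL_N} embeds in C[Rep(N,K)], this is the set of
   f in R vanishing on i_N(Rep(N,K)). *)
definition idealJ :: "nat \<Rightarrow> nat \<Rightarrow> (point \<Rightarrow> complex) set" where
  "idealJ N K = {f \<in> ringR K. \<forall>B psi psib.
      B \<in> carrier_mat N N \<and> psi \<in> carrier_mat N K \<and> psib \<in> carrier_mat K N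
      \<longrightarrow> f (iN N K B psi psib) = 0}"

definition sumJ1 :: "nat \<Rightarrow> nat \<Rightarrow> ((nat \<Rightarrow> point) \<Rightarrow> complex) set" where
  "sumJ1 K N = ideal_gen (ringRN K N) {(\<lambda>P. g (P j)) | g j. g \<in> idealJ 1 K \<and> j < N}"

end

(* Let Y be the image of i_1 and Y_N that of i_N. Since J_1 is the whole vanishing ideal of Y,
   the ideal generated by its N pull-backs is the vanishing ideal of Y^N (expand a polynomial
   slot by slot and eliminate linear relations among the slot-j factors on Y). So the right-hand
   side consists of the f that vanish on all products y_1 * ... * y_N of points of Y, and it
   remains to see that these products form a dense subset of Y_N.
   If B + psi psib is block upper triangular with a 1 x 1 last block and B - psi psib has a zero
   last column above the diagonal, then i_(n+1) is i_n of the leading block times i_1 of the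
   last one, and any pair of data glues to such a B. Conversely such data are dense: a Schur
   similarity makes B - psi psib lower triangular, and after a generic perturbation of the corner
   entry B + psi psib has a left eigenvector with nonzero last entry, whose elementary change of
   basis clears the last row of B + psi psib. *)

theory Submission
  imports Defs "Jordan_Normal_Form.Schur_Decomposition"
begin

lemma polyfun_mono:
  assumes "C \<subseteq> C'"
  shows "polyfun C \<subseteq> polyfun C'"
proof
  fix f assume "f \<in> polyfun C"
  then show "f \<in> polyfun C'"
    by induction (use assms in \<open>auto intro: polyfun.intros\<close>)
qed

lemma polyfun_compose:
  assumes "f \<in> polyfun C" and "\<And>c. c \<in> C \<Longrightarrow> (\<lambda>x. c (\<Phi> x)) \<in> polyfun C'"
  shows "(\<lambda>x. f (\<Phi> x)) \<in> polyfun C'"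
  using assms(1) by induction (auto intro: polyfun.intros assms(2))

lemma polyfun_sum:
  assumes "finite I" and "\<And>i. i \<in> I \<Longrightarrow> g i \<in> polyfun C"
  shows "(\<lambda>x. \<Sum>i\<in>I. g i x) \<in> polyfun C"
  using assms by induction (auto intro: polyfun.intros)

lemma polyfun_scale: "f \<in> polyfun C \<Longrightarrow> (\<lambda>x. c * f x) \<in> polyfun C"
  by (auto intro: polyfun.intros)

lemma polyfun_diff: "f \<in> polyfun C \<Longrightarrow> g \<in> polyfun C \<Longrightarrow> (\<lambda>x. f x - g x) \<in> polyfun C"
  using polyfun.pf_add[OF _ polyfun_scale[of g C "-1"], of f] by simp

lemma polyfun_empty: "f \<in> polyfun {} \<Longrightarrow> \<exists>c. f = (\<lambda>_. c)"
  by (induction rule: polyfun.induct) auto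

lemma ideal_gen_subset:
  assumes "S \<subseteq> polyfun C"
  shows "ideal_gen (polyfun C) S \<subseteq> polyfun C"
proof
  fix f assume "f \<in> ideal_gen (polyfun C) S"
  then show "f \<in> polyfun C"
    by induction (use assms in \<open>auto intro: polyfun.intros\<close>)
qed

lemma ideal_gen_mult:
  assumes "f \<in> ideal_gen (polyfun C) S" and "r \<in> polyfun C"
  shows "(\<lambda>p. r p * f p) \<in> ideal_gen (polyfun C) S"
  using assms(1)
proof induction
  case (ig_mult r' s)
  have "(\<lambda>p. (r p * r' p) * s p) \<in> ideal_gen (polyfun C) S"
    using ideal_gen.ig_mult[OF polyfun.pf_mult[OF assms(2) ig_mult(1)] ig_mult(2)] .
  then show ?case by (simp add: mult.assoc)
next
  case (ig_add f g)
  then show ?case using ideal_gen.ig_add by (fastforce simp: distrib_left)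
qed (simp add: ideal_gen.ig_zero)

lemma ideal_gen_sum:
  assumes "finite I" and "\<And>i. i \<in> I \<Longrightarrow> g i \<in> ideal_gen A S"
  shows "(\<lambda>x. \<Sum>i\<in>I. g i x) \<in> ideal_gen A S"
  using assms by induction (auto intro: ideal_gen.intros)

lemma ideal_gen_vanishes:
  assumes "f \<in> ideal_gen A S" and "\<And>s. s \<in> S \<Longrightarrow> s p = 0"
  shows "f p = 0"
  using assms(1) by induction (auto simp: assms(2))

section \<open>The vanishing ideal of a power\<close>

definition slot_coords :: "('p \<Rightarrow> complex) set \<Rightarrow> nat \<Rightarrow> nat \<Rightarrow> ((nat \<Rightarrow> 'p) \<Rightarrow> complex) set" where
  "slot_coords C j N = {(\<lambda>P. c (P i)) | c i. c \<in> C \<and> j \<le> i \<and> i < N}"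

definition tuples :: "'p set \<Rightarrow> nat \<Rightarrow> (nat \<Rightarrow> 'p) set" where
  "tuples Y N = {P. \<forall>j<N. P j \<in> Y}"

definition vanishing_ideal :: "('p \<Rightarrow> complex) set \<Rightarrow> 'p set \<Rightarrow> ('p \<Rightarrow> complex) set" where
  "vanishing_ideal C Y = {f \<in> polyfun C. \<forall>y\<in>Y. f y = 0}"

definition slot_ideal ::
    "('p \<Rightarrow> complex) set \<Rightarrow> ('p \<Rightarrow> complex) set \<Rightarrow> nat \<Rightarrow> ((nat \<Rightarrow> 'p) \<Rightarrow> complex) set" where
  "slot_ideal C I N = ideal_gen (polyfun (slot_coords C 0 N)) {(\<lambda>P. g (P j)) | g j. g \<in> I \<and> j < N}"

lemma slot_polyfun:
  assumes "m \<in> polyfun C" and "j \<le> i" and "i < N"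
  shows "(\<lambda>P. m (P i)) \<in> polyfun (slot_coords C j N)"
  by (rule polyfun_compose[OF assms(1)]) (use assms in \<open>auto simp: slot_coords_def intro: polyfun.pf_coord\<close>)

lemma polyfun_slot_coords_antimono:
  assumes "j \<le> j'"
  shows "polyfun (slot_coords C j' N) \<subseteq> polyfun (slot_coords C j N)"
  by (rule polyfun_mono) (use assms in \<open>fastforce simp: slot_coords_def\<close>)

lemma polyfun_slot_coords_upd:
  assumes "F \<in> polyfun (slot_coords C j N)" and "l < j"
  shows "F (P(l := y)) = F P"
  using assms(1) by induction (use assms(2) in \<open>auto simp: slot_coords_def\<close>)

lemma polyfun_slot_coords_const:
  assumes "F \<in> polyfun (slot_coords C j N)" and "N \<le> j"
  shows "\<exists>c. F = (\<lambda>_. c)"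
proof -
  have "slot_coords C j N = {}"
    using assms(2) by (auto simp: slot_coords_def)
  then show ?thesis
    using assms(1) polyfun_empty by metis
qed

lemma polyfun_slot_coords_expand:
  assumes "F \<in> polyfun (slot_coords C j N)" and "j < N"
  shows "\<exists>L. (\<forall>(m, a)\<in>set L. m \<in> polyfun C \<and> a \<in> polyfun (slot_coords C (Suc j) N))
          \<and> F = (\<lambda>P. \<Sum>(m, a)\<leftarrow>L. m (P j) * a P)"
  using assms(1)
proof induction
  case (pf_const c)
  show ?case
    by (rule exI[of _ "[(\<lambda>_. c, \<lambda>_. 1)]"]) (auto intro: polyfun.pf_const)
next
  case (pf_coord f)
  then obtain c i where f: "f = (\<lambda>P. c (P i))" "c \<in> C" "j \<le> i" "i < N"
    by (auto simp: slot_coords_def)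
  show ?case
  proof (cases "i = j")
    case True
    with f show ?thesis
      by (intro exI[of _ "[(c, \<lambda>_. 1)]"]) (auto intro: polyfun.intros)
  next
    case False
    with f have "f \<in> slot_coords C (Suc j) N"
      unfolding slot_coords_def by (intro CollectI exI[of _ c] exI[of _ i]) auto
    then have "f \<in> polyfun (slot_coords C (Suc j) N)"
      by (rule polyfun.pf_coord)
    then show ?thesis
      by (intro exI[of _ "[(\<lambda>_. 1, f)]"]) (auto intro: polyfun.pf_const)
  qed
next
  case (pf_add f g)
  then obtain L1 L2 where
    "\<forall>(m, a)\<in>set L1. m \<in> polyfun C \<and> a \<in> polyfun (slot_coords C (Suc j) N)"
    "f = (\<lambda>P. \<Sum>(m, a)\<leftarrow>L1. m (P j) * a P)"
    "\<forall>(m, a)\<in>set L2. m \<in> polyfun C \<and> a \<in> polyfun (slot_coords C (Suc j) N)"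
    "g = (\<lambda>P. \<Sum>(m, a)\<leftarrow>L2. m (P j) * a P)"
    by blast
  then show ?case
    by (intro exI[of _ "L1 @ L2"]) auto
next
  case (pf_mult f g)
  then obtain L1 L2 where L1:
    "\<forall>(m, a)\<in>set L1. m \<in> polyfun C \<and> a \<in> polyfun (slot_coords C (Suc j) N)"
    "f = (\<lambda>P. \<Sum>(m, a)\<leftarrow>L1. m (P j) * a P)"
    and L2:
    "\<forall>(m, a)\<in>set L2. m \<in> polyfun C \<and> a \<in> polyfun (slot_coords C (Suc j) N)"
    "g = (\<lambda>P. \<Sum>(m, a)\<leftarrow>L2. m (P j) * a P)"
    by blast
  define L where "L = [(\<lambda>p. m1 p * m2 p, \<lambda>P. a1 P * a2 P). (m1, a1) \<leftarrow> L1, (m2, a2) \<leftarrow> L2]"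
  have "\<forall>(m, a)\<in>set L. m \<in> polyfun C \<and> a \<in> polyfun (slot_coords C (Suc j) N)"
    using L1(1) L2(1) by (fastforce simp: L_def intro: polyfun.pf_mult)
  moreover have "f P * g P = (\<Sum>(m, a)\<leftarrow>L. m (P j) * a P)" for P
    unfolding L1(2) L2(2) L_def
    by (induction L1) (auto simp: sum_list_const_mult algebra_simps comp_def split_def)
  ultimately show ?case
    by blast
qed

lemma sum_eliminate_term:
  fixes m a q :: "'i \<Rightarrow> 'a::comm_ring_1"
  assumes "finite I" and "k0 \<in> I" and "q k0 = 1"
  shows "(\<Sum>k\<in>I. m k * a k) = (\<Sum>k\<in>I - {k0}. m k * (a k - q k * a k0)) + (\<Sum>k\<in>I. q k * m k) * a k0"
proof -
  have "(\<Sum>k\<in>I - {k0}. m k * (a k - q k * a k0))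
      = (\<Sum>k\<in>I - {k0}. m k * a k) - (\<Sum>k\<in>I - {k0}. q k * m k) * a k0"
    by (simp add: right_diff_distrib sum_subtractf sum_distrib_left sum_distrib_right mult_ac)
  moreover have "(\<Sum>k\<in>I. f k) = f k0 + (\<Sum>k\<in>I - {k0}. f k)" for f :: "'i \<Rightarrow> 'a"
    using assms(1,2) by (rule sum.remove)
  ultimately show ?thesis
    using assms(3) by (simp add: algebra_simps)
qed

lemma tuples_upd: "P \<in> tuples Y N \<Longrightarrow> y \<in> Y \<Longrightarrow> P(j := y) \<in> tuples Y N"
  by (simp add: tuples_def)

lemma slot_ideal_generator:
  assumes "g \<in> I" and "j < N" and "r \<in> polyfun (slot_coords C 0 N)"
  shows "(\<lambda>P. r P * g (P j)) \<in> slot_ideal C I N"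
  unfolding slot_ideal_def by (rule ideal_gen.ig_mult[OF assms(3)]) (use assms in auto)

text \<open>Freezing all slots but \<open>j\<close> and letting slot \<open>j\<close> range over \<open>Y\<close> turns the vanishing
  of the sum into a linear relation among the slot-\<open>j\<close> factors on \<open>Y\<close>.\<close>

lemma tuples_coefficients_vanish:
  assumes indep: "\<And>c. \<forall>y\<in>Y. (\<Sum>k\<in>I. c k * m k y) = 0 \<Longrightarrow> \<forall>k\<in>I. c k = 0"
    and a: "\<And>k. k \<in> I \<Longrightarrow> a k \<in> polyfun (slot_coords C (Suc j) N)"
    and F: "\<forall>P\<in>tuples Y N. (\<Sum>k\<in>I. m k (P j) * a k P) = 0"
    and "k \<in> I" and P: "P \<in> tuples Y N"
  shows "a k P = 0"
proof -
  have "(\<Sum>k\<in>I. a k P * m k y) = 0" if y: "y \<in> Y" for y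
  proof -
    have "(\<Sum>k\<in>I. a k P * m k y) = (\<Sum>k\<in>I. m k ((P(j := y)) j) * a k (P(j := y)))"
      using polyfun_slot_coords_upd[OF a, of _ j P y] by (simp add: mult.commute)
    also have "\<dots> = 0"
      using F tuples_upd[OF P y] by blast
    finally show ?thesis .
  qed
  then show ?thesis
    using indep[of "\<lambda>k. a k P"] \<open>k \<in> I\<close> by blast
qed

lemma eliminate_dependent_factor:
  assumes "finite I" and "k0 \<in> I" and "c k0 \<noteq> 0" and "\<And>k. k \<in> I \<Longrightarrow> m k \<in> polyfun C"
    and "\<forall>y\<in>Y. (\<Sum>k\<in>I. c k * m k y) = 0"
  defines "g \<equiv> \<lambda>p. \<Sum>k\<in>I. c k / c k0 * m k p"
  shows "g \<in> vanishing_ideal C Y"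
    and "(\<Sum>k\<in>I. m k x * a k) = (\<Sum>k\<in>I - {k0}. m k x * (a k - c k / c k0 * a k0)) + g x * a k0"
proof -
  have "g \<in> polyfun C"
    unfolding g_def by (rule polyfun_sum[OF assms(1) polyfun_scale[OF assms(4)]])
  moreover have "g y = (\<Sum>k\<in>I. c k * m k y) / c k0" for y
    by (simp add: g_def sum_divide_distrib)
  ultimately show "g \<in> vanishing_ideal C Y"
    using assms(5) by (simp add: vanishing_ideal_def)
  show "(\<Sum>k\<in>I. m k x * a k) = (\<Sum>k\<in>I - {k0}. m k x * (a k - c k / c k0 * a k0)) + g x * a k0"
    unfolding g_def by (rule sum_eliminate_term[OF assms(1,2)]) (simp add: assms(3))
qed

lemma tuples_vanishing_sum_in_slot_ideal:
  assumes IH: "\<And>G. G \<in> polyfun (slot_coords C (Suc j) N) \<Longrightarrow> \<forall>P\<in>tuples Y N. G P = 0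
      \<Longrightarrow> G \<in> slot_ideal C (vanishing_ideal C Y) N"
    and "j < N" and "finite I"
  shows "(\<forall>k\<in>I. m k \<in> polyfun C \<and> a k \<in> polyfun (slot_coords C (Suc j) N))
    \<Longrightarrow> \<forall>P\<in>tuples Y N. (\<Sum>k\<in>I. m k (P j) * a k P) = 0
    \<Longrightarrow> (\<lambda>P. \<Sum>k\<in>I. m k (P j) * a k P) \<in> slot_ideal C (vanishing_ideal C Y) N"
  using \<open>finite I\<close>
proof (induction I arbitrary: a rule: finite_psubset_induct)
  case (psubset I)
  let ?J = "slot_ideal C (vanishing_ideal C Y) N"
  have m: "m k \<in> polyfun C" and a: "a k \<in> polyfun (slot_coords C (Suc j) N)" if "k \<in> I" for k
    using psubset.prems(1) that by auto
  show ?case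
  proof (cases "\<exists>c k0. k0 \<in> I \<and> c k0 \<noteq> 0 \<and> (\<forall>y\<in>Y. (\<Sum>k\<in>I. c k * m k y) = 0)")
    case True
    then obtain c k0 where k0: "k0 \<in> I" "c k0 \<noteq> 0" and dep: "\<forall>y\<in>Y. (\<Sum>k\<in>I. c k * m k y) = 0"
      by blast
    define g where "g p = (\<Sum>k\<in>I. c k / c k0 * m k p)" for p
    define a' where "a' k = (\<lambda>P. a k P - c k / c k0 * a k0 P)" for k
    have g: "g \<in> vanishing_ideal C Y"
      unfolding g_def by (rule eliminate_dependent_factor(1)[OF psubset.hyps(1) k0 m dep])
    have split: "(\<Sum>k\<in>I. m k (P j) * a k P) = (\<Sum>k\<in>I - {k0}. m k (P j) * a' k P) + g (P j) * a k0 P" for P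
      unfolding a'_def g_def by (rule eliminate_dependent_factor(2)[OF psubset.hyps(1) k0 m dep])
    have "(\<lambda>P. \<Sum>k\<in>I - {k0}. m k (P j) * a' k P) \<in> ?J"
    proof (rule psubset.IH)
      show "I - {k0} \<subset> I"
        using k0(1) by blast
      show "\<forall>k\<in>I - {k0}. m k \<in> polyfun C \<and> a' k \<in> polyfun (slot_coords C (Suc j) N)"
      proof
        fix k assume "k \<in> I - {k0}"
        then show "m k \<in> polyfun C \<and> a' k \<in> polyfun (slot_coords C (Suc j) N)"
          using m polyfun_diff[OF a polyfun_scale[OF a[OF k0(1)]]] unfolding a'_def by blast
      qed
      have "g (P j) = 0" if "P \<in> tuples Y N" for P
        using g that \<open>j < N\<close> by (simp add: vanishing_ideal_def tuples_def)
      then show "\<forall>P\<in>tuples Y N. (\<Sum>k\<in>I - {k0}. m k (P j) * a' k P) = 0"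
        using psubset.prems(2) by (simp add: split)
    qed
    moreover have "(\<lambda>P. g (P j) * a k0 P) \<in> ?J"
      using slot_ideal_generator[OF g \<open>j < N\<close>] a[OF k0(1)] polyfun_slot_coords_antimono[of 0 "Suc j" C N]
      by (auto simp: mult.commute)
    ultimately have "(\<lambda>P. (\<Sum>k\<in>I - {k0}. m k (P j) * a' k P) + g (P j) * a k0 P) \<in> ?J"
      unfolding slot_ideal_def by (rule ideal_gen.ig_add)
    then show ?thesis
      by (simp only: split)
  next
    case False
    then have indep: "\<And>c. \<forall>y\<in>Y. (\<Sum>k\<in>I. c k * m k y) = 0 \<Longrightarrow> \<forall>k\<in>I. c k = 0"
      by blast
    have "(\<lambda>P. m k (P j) * a k P) \<in> ?J" if k: "k \<in> I" for k
    proof -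
      have "a k \<in> ?J"
        using IH[OF a[OF k]] tuples_coefficients_vanish[OF indep a psubset.prems(2) k] by blast
      moreover have "(\<lambda>P. m k (P j)) \<in> polyfun (slot_coords C 0 N)"
        using slot_polyfun[OF m[OF k] _ \<open>j < N\<close>] by simp
      ultimately show ?thesis
        unfolding slot_ideal_def by (rule ideal_gen_mult)
    qed
    then show ?thesis
      unfolding slot_ideal_def by (rule ideal_gen_sum[OF psubset.hyps(1)])
  qed
qed

lemma tuples_vanishing_in_slot_ideal:
  assumes "Y \<noteq> {}"
  shows "F \<in> polyfun (slot_coords C j N) \<Longrightarrow> \<forall>P\<in>tuples Y N. F P = 0
    \<Longrightarrow> F \<in> slot_ideal C (vanishing_ideal C Y) N"
proof (induction "N - j" arbitrary: j F)
  case 0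
  then obtain c where c: "F = (\<lambda>_. c)"
    using polyfun_slot_coords_const by fastforce
  obtain y where "y \<in> Y"
    using assms by blast
  then have "(\<lambda>_. y) \<in> tuples Y N"
    by (simp add: tuples_def)
  then have "c = 0"
    using 0 c by auto
  then show ?case
    using c ideal_gen.ig_zero by (simp add: slot_ideal_def)
next
  case (Suc d)
  then have "j < N"
    by simp
  obtain L where L: "\<forall>(m, a)\<in>set L. m \<in> polyfun C \<and> a \<in> polyfun (slot_coords C (Suc j) N)"
    and F: "F = (\<lambda>P. \<Sum>(m, a)\<leftarrow>L. m (P j) * a P)"
    using polyfun_slot_coords_expand[OF Suc.prems(1) \<open>j < N\<close>] by blast
  have F': "F = (\<lambda>P. \<Sum>k<length L. fst (L ! k) (P j) * snd (L ! k) P)"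
    unfolding F by (simp add: sum_list_sum_nth atLeast0LessThan split_def)
  show ?case
    unfolding F'
  proof (rule tuples_vanishing_sum_in_slot_ideal[OF _ \<open>j < N\<close>])
    show "\<And>G. G \<in> polyfun (slot_coords C (Suc j) N) \<Longrightarrow> \<forall>P\<in>tuples Y N. G P = 0
        \<Longrightarrow> G \<in> slot_ideal C (vanishing_ideal C Y) N"
      using Suc(1)[of "Suc j"] Suc(2) by simp
    show "\<forall>k\<in>{..<length L}. fst (L ! k) \<in> polyfun C \<and> snd (L ! k) \<in> polyfun (slot_coords C (Suc j) N)"
    proof
      fix k assume "k \<in> {..<length L}"
      then have "L ! k \<in> set L"
        by simp
      then show "fst (L ! k) \<in> polyfun C \<and> snd (L ! k) \<in> polyfun (slot_coords C (Suc j) N)"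
        using L by (auto simp: split_def)
    qed
  qed (use Suc.prems F' in auto)
qed

theorem vanishing_ideal_tuples:
  assumes "Y \<noteq> {}"
  shows "vanishing_ideal (slot_coords C 0 N) (tuples Y N) = slot_ideal C (vanishing_ideal C Y) N"
proof (intro equalityI subsetI)
  fix F assume "F \<in> vanishing_ideal (slot_coords C 0 N) (tuples Y N)"
  then have "F \<in> polyfun (slot_coords C 0 N)" and "\<forall>P\<in>tuples Y N. F P = 0"
    unfolding vanishing_ideal_def by auto
  then show "F \<in> slot_ideal C (vanishing_ideal C Y) N"
    by (rule tuples_vanishing_in_slot_ideal[OF assms])
next
  fix F assume F: "F \<in> slot_ideal C (vanishing_ideal C Y) N"
  have "{(\<lambda>P. g (P j)) | g j. g \<in> vanishing_ideal C Y \<and> j < N} \<subseteq> polyfun (slot_coords C 0 N)"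
    using slot_polyfun by (fastforce simp: vanishing_ideal_def)
  then have "F \<in> polyfun (slot_coords C 0 N)"
    using F ideal_gen_subset unfolding slot_ideal_def by blast
  moreover have "F P = 0" if P: "P \<in> tuples Y N" for P
  proof (rule ideal_gen_vanishes[OF F[unfolded slot_ideal_def]])
    fix s assume "s \<in> {(\<lambda>P. g (P j)) | g j. g \<in> vanishing_ideal C Y \<and> j < N}"
    then obtain g j where "s = (\<lambda>P. g (P j))" "g \<in> vanishing_ideal C Y" "j < N"
      by blast
    with P show "s P = 0"
      by (simp add: vanishing_ideal_def tuples_def)
  qed
  ultimately show "F \<in> vanishing_ideal (slot_coords C 0 N) (tuples Y N)"
    by (simp add: vanishing_ideal_def)
qed

section \<open>Coordinates and the group law\<close>

definition same_coords :: "nat \<Rightarrow> point \<Rightarrow> point \<Rightarrow> bool" where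
  "same_coords K p q \<longleftrightarrow>
     (\<forall>i a b. 1 \<le> i \<longrightarrow> a < K \<longrightarrow> b < K \<longrightarrow> fst p i a b = fst q i a b)
     \<and> (\<forall>i. 1 \<le> i \<longrightarrow> snd p i = snd q i)"

lemma same_coords_refl: "same_coords K p p"
  unfolding same_coords_def by auto

lemma same_coords_sym: "same_coords K p q \<Longrightarrow> same_coords K q p"
  unfolding same_coords_def by auto

lemma same_coords_trans: "same_coords K p q \<Longrightarrow> same_coords K q r \<Longrightarrow> same_coords K p r"
  unfolding same_coords_def by auto

lemma ringR_same_coords:
  assumes "f \<in> ringR K" and "same_coords K p q"
  shows "f p = f q"
  using assms(1) unfolding ringR_def
proof induction
  case (pf_coord f)
  with assms(2) show ?case
    by (auto simp: coordsR_def same_coords_def split: prod.splits)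
qed auto

lemma mulG_same_coords:
  assumes "same_coords K p p'" and "same_coords K q q'"
  shows "same_coords K (mulG K p q) (mulG K p' q')"
proof -
  have "serK (fst p) i a c = serK (fst p') i a c" "serK (fst q) i a c = serK (fst q') i a c"
    if "a < K" "c < K" for i a c
    using assms that unfolding same_coords_def serK_def by auto
  moreover have "ser1 (snd p) i = ser1 (snd p') i" "ser1 (snd q) i = ser1 (snd q') i" for i
    using assms unfolding same_coords_def ser1_def by auto
  ultimately show ?thesis
    by (cases p, cases q, cases p', cases q') (simp add: same_coords_def mulG_def)
qed

definition polynomial_map :: "nat \<Rightarrow> ('q \<Rightarrow> complex) set \<Rightarrow> ('q \<Rightarrow> point) \<Rightarrow> bool" where
  "polynomial_map K C \<Phi> \<longleftrightarrow>
     (\<forall>i a b. 1 \<le> i \<longrightarrow> a < K \<longrightarrow> b < K \<longrightarrow> (\<lambda>y. fst (\<Phi> y) i a b) \<in> polyfun C)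
     \<and> (\<forall>i. 1 \<le> i \<longrightarrow> (\<lambda>y. snd (\<Phi> y) i) \<in> polyfun C)"

lemma ringR_compose:
  assumes "f \<in> ringR K" and "polynomial_map K C \<Phi>"
  shows "(\<lambda>y. f (\<Phi> y)) \<in> polyfun C"
  by (rule polyfun_compose[OF assms(1)[unfolded ringR_def]])
    (use assms(2) in \<open>auto simp: coordsR_def polynomial_map_def case_prod_beta\<close>)

lemma polynomial_map_const: "polynomial_map K C (\<lambda>_. p)"
  by (simp add: polynomial_map_def polyfun.pf_const)

lemma polynomial_map_id: "polynomial_map K (coordsR K) (\<lambda>p. p)"
proof -
  have "(\<lambda>(x, h). x i a b) \<in> coordsR K" if "1 \<le> i" "a < K" "b < K" for i a b
    using that unfolding coordsR_def by blast
  moreover have "(\<lambda>(x, h). h i) \<in> coordsR K" if "1 \<le> i" for i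
    using that unfolding coordsR_def by blast
  ultimately show ?thesis
    unfolding polynomial_map_def case_prod_beta by (auto intro: polyfun.pf_coord)
qed

lemma polynomial_map_slot:
  assumes "j < N"
  shows "polynomial_map K (coordsN K N) (\<lambda>P. P j)"
  unfolding polynomial_map_def
proof (intro conjI allI impI)
  fix i a b :: nat assume "1 \<le> i" "a < K" "b < K"
  then have "(\<lambda>P. (\<lambda>(x, h). x i a b) (P j)) \<in> coordsN K N"
    using assms unfolding coordsN_def coordsR_def by blast
  then show "(\<lambda>P. fst (P j) i a b) \<in> polyfun (coordsN K N)"
    by (simp add: case_prod_beta polyfun.pf_coord)
next
  fix i :: nat assume "1 \<le> i"
  then have "(\<lambda>P. (\<lambda>(x, h). h i) (P j)) \<in> coordsN K N"
    using assms unfolding coordsN_def coordsR_def by blast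
  then show "(\<lambda>P. snd (P j) i) \<in> polyfun (coordsN K N)"
    by (simp add: case_prod_beta polyfun.pf_coord)
qed

lemma polynomial_map_mulG:
  assumes p: "polynomial_map K C p" and q: "polynomial_map K C q"
  shows "polynomial_map K C (\<lambda>y. mulG K (p y) (q y))"
proof -
  have serK: "(\<lambda>y. serK (fst (r y)) i a b) \<in> polyfun C"
    if "polynomial_map K C r" "a < K" "b < K" for r i a b
    using that by (cases "i = 0") (auto simp: serK_def polynomial_map_def intro: polyfun.pf_const)
  have ser1: "(\<lambda>y. ser1 (snd (r y)) i) \<in> polyfun C" if "polynomial_map K C r" for r i
    using that by (cases "i = 0") (auto simp: ser1_def polynomial_map_def intro: polyfun.pf_const)
  have mulG: "mulG K (p y) (q y) =
      ((\<lambda>n a b. \<Sum>i\<le>n. \<Sum>c<K. serK (fst (p y)) i a c * serK (fst (q y)) (n - i) c b),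
       (\<lambda>n. \<Sum>i\<le>n. ser1 (snd (p y)) i * ser1 (snd (q y)) (n - i)))" for y
    by (cases "p y", cases "q y") (simp add: mulG_def)
  show ?thesis
    unfolding polynomial_map_def mulG
    using serK[OF p] serK[OF q] ser1[OF p] ser1[OF q]
    by (auto intro!: polyfun_sum polyfun.pf_mult)
qed

lemma polynomial_map_multN:
  assumes "n \<le> N"
  shows "polynomial_map K (coordsN K N) (multN K n)"
  using assms
proof (induction n)
  case 0
  then show ?case
    using polynomial_map_const[of K _ unitG] by simp
next
  case (Suc n)
  then show ?case
    using polynomial_map_mulG[OF _ polynomial_map_slot] by simp
qed

lemma DeltaN_ringRN: "f \<in> ringR K \<Longrightarrow> DeltaN K N f \<in> ringRN K N"
  unfolding DeltaN_def ringRN_def by (erule ringR_compose[OF _ polynomial_map_multN[OF order_refl]])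

lemma ringR_mulG_right:
  assumes "f \<in> ringR K"
  shows "(\<lambda>p. f (mulG K p q)) \<in> ringR K"
  using ringR_compose[OF assms polynomial_map_mulG[OF polynomial_map_id polynomial_map_const]]
  by (simp add: ringR_def)

section \<open>Factorization of block-triangular data\<close>

lemma index_mult_mat_sum:
  assumes "A \<in> carrier_mat m n" and "B \<in> carrier_mat n p" and "i < m" and "j < p"
  shows "(A * B) $$ (i, j) = (\<Sum>k<n. A $$ (i, k) * B $$ (k, j))"
  using assms by (simp add: scalar_prod_def atLeast0LessThan)

lemma index_mult_mat_triple:
  assumes "L \<in> carrier_mat r m" and "X \<in> carrier_mat m m'" and "R \<in> carrier_mat m' s"
    and "a < r" and "b < s"
  shows "(L * X * R) $$ (a, b) = (\<Sum>i<m. \<Sum>j<m'. L $$ (a, i) * X $$ (i, j) * R $$ (j, b))"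
proof -
  have "(L * X * R) $$ (a, b) = (\<Sum>j<m'. (L * X) $$ (a, j) * R $$ (j, b))"
    using assms by (intro index_mult_mat_sum[of _ r m']) auto
  also have "\<dots> = (\<Sum>j<m'. (\<Sum>i<m. L $$ (a, i) * X $$ (i, j)) * R $$ (j, b))"
    using index_mult_mat_sum[OF assms(1,2,4)] by simp
  also have "\<dots> = (\<Sum>i<m. \<Sum>j<m'. L $$ (a, i) * X $$ (i, j) * R $$ (j, b))"
    by (simp add: sum_distrib_right sum.swap[of _ "{..<m'}"])
  finally show ?thesis .
qed

definition sub_mat :: "nat \<Rightarrow> nat \<Rightarrow> nat \<Rightarrow> nat \<Rightarrow> 'a mat \<Rightarrow> 'a mat" where
  "sub_mat r c i0 j0 M = mat r c (\<lambda>(i, j). M $$ (i0 + i, j0 + j))"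

lemma sub_mat_carrier [simp]: "sub_mat r c i0 j0 M \<in> carrier_mat r c"
  and dim_sub_mat [simp]: "dim_row (sub_mat r c i0 j0 M) = r" "dim_col (sub_mat r c i0 j0 M) = c"
  and index_sub_mat [simp]: "i < r \<Longrightarrow> j < c \<Longrightarrow> sub_mat r c i0 j0 M $$ (i, j) = M $$ (i0 + i, j0 + j)"
  by (simp_all add: sub_mat_def)

lemma pow_mat_last_row_zero:
  fixes A :: "'a::comm_ring_1 mat"
  assumes A: "A \<in> carrier_mat (Suc n) (Suc n)" and A1: "A1 \<in> carrier_mat n n"
    and low: "\<forall>j<n. A $$ (n, j) = 0" and A1A: "\<forall>i<n. \<forall>j<n. A1 $$ (i, j) = A $$ (i, j)"
  shows "(\<forall>i<n. \<forall>j<n. (A ^\<^sub>m p) $$ (i, j) = (A1 ^\<^sub>m p) $$ (i, j))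
    \<and> (\<forall>j<n. (A ^\<^sub>m p) $$ (n, j) = 0)
    \<and> (A ^\<^sub>m p) $$ (n, n) = A $$ (n, n) ^ p
    \<and> (\<forall>i<n. (A ^\<^sub>m p) $$ (i, n) =
          (\<Sum>k<p. (\<Sum>l<n. (A1 ^\<^sub>m k) $$ (i, l) * A $$ (l, n)) * A $$ (n, n) ^ (p - 1 - k)))"
proof (induction p)
  case 0
  show ?case using A A1 by auto
next
  case (Suc p)
  let ?a = "A $$ (n, n)"
  have AP: "A ^\<^sub>m p \<in> carrier_mat (Suc n) (Suc n)"
    using A by simp
  have e: "(A ^\<^sub>m p * A) $$ (i, j) = (\<Sum>k<n. (A ^\<^sub>m p) $$ (i, k) * A $$ (k, j)) + (A ^\<^sub>m p) $$ (i, n) * A $$ (n, j)"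
    if "i < Suc n" "j < Suc n" for i j
    using index_mult_mat_sum[OF AP A that] by simp
  have e1: "(A1 ^\<^sub>m p * A1) $$ (i, j) = (\<Sum>k<n. (A1 ^\<^sub>m p) $$ (i, k) * A1 $$ (k, j))"
    if "i < n" "j < n" for i j
    by (rule index_mult_mat_sum[OF _ A1 that]) (use A1 in simp)
  have last_col: "(\<Sum>k<p. X k * ?a ^ (p - Suc k)) * ?a = (\<Sum>k<p. X k * ?a ^ (p - k))" for X
    unfolding sum_distrib_right
    by (rule sum.cong[OF refl]) (auto simp: mult.assoc power_Suc2[symmetric] Suc_diff_Suc)
  show ?case
    using Suc.IH low A1A by (auto simp: e e1 last_col)
qed

lemma triple_pow_mat_last_row_zero:
  fixes A :: "'a::comm_ring_1 mat"
  assumes A: "A \<in> carrier_mat (Suc n) (Suc n)" and A1: "A1 \<in> carrier_mat n n"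
    and low: "\<forall>j<n. A $$ (n, j) = 0" and A1A: "\<forall>i<n. \<forall>j<n. A1 $$ (i, j) = A $$ (i, j)"
    and psi: "psi \<in> carrier_mat (Suc n) K" and psib: "psib \<in> carrier_mat K (Suc n)"
    and col: "\<forall>l<n. A $$ (l, n) = (\<Sum>c<K. psi $$ (l, c) * psib $$ (c, n))"
    and ab: "a < K" "b < K"
  defines "psi1 \<equiv> sub_mat n K 0 0 psi" and "psib1 \<equiv> sub_mat K n 0 0 psib"
  shows "(psib * A ^\<^sub>m p * psi) $$ (a, b) = (psib1 * A1 ^\<^sub>m p * psi1) $$ (a, b)
     + (\<Sum>k<p. \<Sum>c<K. (psib1 * A1 ^\<^sub>m k * psi1) $$ (a, c) * (psib $$ (c, n) * A $$ (n, n) ^ (p - 1 - k) * psi $$ (n, b)))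
     + psib $$ (a, n) * A $$ (n, n) ^ p * psi $$ (n, b)"
proof -
  let ?a = "A $$ (n, n)"
  note PB = pow_mat_last_row_zero[OF A A1 low A1A, of p]
  have inner: "(psib1 * A1 ^\<^sub>m k * psi1) $$ (a, c)
      = (\<Sum>i<n. \<Sum>l<n. psib $$ (a, i) * (A1 ^\<^sub>m k) $$ (i, l) * psi $$ (l, c))" if "c < K" for k c
    using index_mult_mat_triple[of psib1 K n "A1 ^\<^sub>m k" n psi1 K a c] A1 ab that
    by (simp add: psi1_def psib1_def)
  define T where "T i j = psib $$ (a, i) * (A ^\<^sub>m p) $$ (i, j) * psi $$ (j, b)" for i j
  have "(psib * A ^\<^sub>m p * psi) $$ (a, b) = (\<Sum>i<Suc n. \<Sum>j<Suc n. T i j)"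
    unfolding T_def by (rule index_mult_mat_triple[OF psib _ psi ab]) (use A in simp)
  also have "\<dots> = (\<Sum>i<n. \<Sum>j<n. T i j) + (\<Sum>i<n. T i n) + (\<Sum>j<n. T n j) + T n n"
    by (simp add: sum.distrib)
  also have "(\<Sum>j<n. T n j) = 0"
    using PB by (simp add: T_def)
  also have "T n n = psib $$ (a, n) * ?a ^ p * psi $$ (n, b)"
    using PB by (simp add: T_def)
  also have "(\<Sum>i<n. \<Sum>j<n. T i j) = (psib1 * A1 ^\<^sub>m p * psi1) $$ (a, b)"
    using PB inner[OF ab(2)] by (simp add: T_def)
  also have "(\<Sum>i<n. T i n) = (\<Sum>k<p. \<Sum>c<K. (psib1 * A1 ^\<^sub>m k * psi1) $$ (a, c)
      * (psib $$ (c, n) * ?a ^ (p - 1 - k) * psi $$ (n, b)))"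
  proof -
    define f where "f i k l c = psib $$ (a, i) * (A1 ^\<^sub>m k) $$ (i, l) * psi $$ (l, c)
      * (psib $$ (c, n) * ?a ^ (p - 1 - k) * psi $$ (n, b))" for i k l c
    have "(\<Sum>i<n. T i n) = (\<Sum>i<n. \<Sum>k<p. \<Sum>l<n. \<Sum>c<K. f i k l c)"
      using PB col by (simp add: T_def f_def sum_distrib_left sum_distrib_right mult_ac)
    also have "\<dots> = (\<Sum>k<p. \<Sum>c<K. \<Sum>i<n. \<Sum>l<n. f i k l c)"
      by (subst sum.swap) (simp add: sum.swap[of _ "{..<K}"])
    also have "\<dots> = (\<Sum>k<p. \<Sum>c<K. (psib1 * A1 ^\<^sub>m k * psi1) $$ (a, c)
        * (psib $$ (c, n) * ?a ^ (p - 1 - k) * psi $$ (n, b)))"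
      by (simp add: f_def inner sum_distrib_right)
    finally show ?thesis .
  qed
  finally show ?thesis
    by simp
qed

lemma pow_mat_1x1:
  assumes "M \<in> carrier_mat 1 1"
  shows "(M ^\<^sub>m q) $$ (0, 0) = M $$ (0, 0) ^ q"
proof (induction q)
  case (Suc q)
  have "(M ^\<^sub>m q * M) $$ (0, 0) = (M ^\<^sub>m q) $$ (0, 0) * M $$ (0, 0)"
    using index_mult_mat_sum[of "M ^\<^sub>m q" 1 1 M 1 0 0] assms by simp
  with Suc show ?case
    by (metis pow_mat.simps(2) power_Suc2)
qed (use assms in simp)

lemma char_poly_1x1:
  assumes "M \<in> carrier_mat 1 1"
  shows "char_poly M = [:- M $$ (0, 0), 1:]"
proof -
  have "char_poly M = char_poly_matrix M $$ (0, 0)"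
    unfolding char_poly_def by (rule det_single) (use assms in simp)
  also have "\<dots> = [:- M $$ (0, 0), 1:]"
    using assms unfolding char_poly_matrix_def by simp
  finally show ?thesis .
qed

lemma char_poly_last_row_zero:
  fixes Bt :: "'a::idom mat"
  assumes Bt: "Bt \<in> carrier_mat (Suc n) (Suc n)" and low: "\<forall>j<n. Bt $$ (n, j) = 0"
  shows "char_poly Bt = char_poly (sub_mat n n 0 0 Bt) * [:- Bt $$ (n, n), 1:]"
proof -
  let ?A1 = "sub_mat n n 0 0 Bt" and ?A2 = "sub_mat n 1 0 n Bt" and ?A4 = "sub_mat 1 1 n n Bt"
  let ?cm = "\<lambda>A. [:0, 1:] \<cdot>\<^sub>m 1\<^sub>m (dim_row A) + map_mat (\<lambda>a. [:- a:]) A"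
  have "Bt = four_block_mat ?A1 ?A2 (0\<^sub>m 1 n) ?A4"
    by (rule eq_matI) (use Bt low in \<open>auto simp: less_Suc_eq\<close>)
  then have "char_poly Bt = det (?cm (four_block_mat ?A1 ?A2 (0\<^sub>m 1 n) ?A4))"
    unfolding char_poly_defs by simp
  also have "?cm (four_block_mat ?A1 ?A2 (0\<^sub>m 1 n) ?A4)
      = four_block_mat (?cm ?A1) (map_mat (\<lambda>a. [:- a:]) ?A2) (0\<^sub>m 1 n) (?cm ?A4)"
    by (rule eq_matI) (auto simp: one_poly_def)
  also have "det \<dots> = char_poly ?A1 * char_poly ?A4"
    unfolding char_poly_defs by (rule det_four_block_mat_lower_left_zero[of _ n _ 1]) auto
  finally show ?thesis
    by (simp add: char_poly_1x1)
qed

lemma fst_mulG: "fst (mulG K p q) m a b = (\<Sum>i\<le>m. \<Sum>c<K. serK (fst p) i a c * serK (fst q) (m - i) c b)"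
  by (cases p, cases q) (simp add: mulG_def)

lemma snd_mulG: "snd (mulG K p q) m = (\<Sum>i\<le>m. ser1 (snd p) i * ser1 (snd q) (m - i))"
  by (cases p, cases q) (simp add: mulG_def)

text \<open>The two terms in which one factor contributes its constant coefficient \<open>1\<close> are split off.\<close>

lemma fst_mulG_Suc:
  assumes "a < K" and "b < K"
  shows "fst (mulG K p q) (Suc n) a b = fst q (Suc n) a b
    + (\<Sum>k<n. \<Sum>c<K. fst p (Suc k) a c * fst q (n - k) c b) + fst p (Suc n) a b"
proof -
  define f where "f i = (\<Sum>c<K. serK (fst p) i a c * serK (fst q) (Suc n - i) c b)" for i
  have "fst (mulG K p q) (Suc n) a b = f 0 + (\<Sum>k<n. f (Suc k)) + f (Suc n)"
    unfolding fst_mulG f_def[symmetric] sum.atMost_Suc_shift by (simp add: lessThan_Suc_atMost[symmetric])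
  moreover have "f 0 = (\<Sum>c<K. if c = a then fst q (Suc n) c b else 0)"
    unfolding f_def by (rule sum.cong) (auto simp: serK_def)
  moreover have "f (Suc n) = (\<Sum>c<K. if c = b then fst p (Suc n) a c else 0)"
    unfolding f_def by (rule sum.cong) (auto simp: serK_def)
  moreover have "f (Suc k) = (\<Sum>c<K. fst p (Suc k) a c * fst q (n - k) c b)" if "k < n" for k
    using that by (simp add: f_def serK_def)
  ultimately show ?thesis
    using assms by simp
qed

lemma fst_iN:
  "1 \<le> i \<Longrightarrow> a < K \<Longrightarrow> b < K \<Longrightarrow>
    fst (iN N K B psi psib) i a b = (psib * ((1/2) \<cdot>\<^sub>m Btil B psi psib) ^\<^sub>m (i - 1) * psi) $$ (a, b)"
  by (simp add: iN_def)

lemma fst_iN_1x1: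
  assumes "b0 \<in> carrier_mat 1 1" "psi \<in> carrier_mat 1 K" "psib \<in> carrier_mat K 1"
    and "1 \<le> i" "a < K" "b < K"
  shows "fst (iN 1 K b0 psi psib) i a b = psib $$ (a, 0) * (Btil b0 psi psib $$ (0, 0) / 2) ^ (i - 1) * psi $$ (0, b)"
proof -
  let ?A = "(1/2) \<cdot>\<^sub>m Btil b0 psi psib"
  have Bt: "Btil b0 psi psib \<in> carrier_mat 1 1"
    using assms(1-3) by (simp add: Btil_def)
  then have A: "?A \<in> carrier_mat 1 1"
    by simp
  have "fst (iN 1 K b0 psi psib) i a b = (psib * ?A ^\<^sub>m (i - 1) * psi) $$ (a, b)"
    using assms(4-6) by (rule fst_iN)
  also have "\<dots> = (\<Sum>k<1. \<Sum>l<1. psib $$ (a, k) * (?A ^\<^sub>m (i - 1)) $$ (k, l) * psi $$ (l, b))"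
    by (rule index_mult_mat_triple[OF assms(3) _ assms(2) assms(5,6)]) (use A in simp)
  finally show ?thesis
    using pow_mat_1x1[OF A] Bt by simp
qed

lemma ser1_snd_iN:
  assumes "Btil B psi psib \<in> carrier_mat N N"
  shows "ser1 (snd (iN N K B psi psib)) i = coeff (reflect_poly (char_poly (Btil B psi psib))) i"
  using degree_monic_char_poly[OF assms]
  by (auto simp: iN_def ser1_def coeff_reflect_poly not_less)

lemma sub_mat_Btil:
  assumes "B \<in> carrier_mat m m" "psi \<in> carrier_mat m K" "psib \<in> carrier_mat K m" and "i0 + r \<le> m"
  shows "sub_mat r r i0 i0 (Btil B psi psib) = Btil (sub_mat r r i0 i0 B) (sub_mat r K i0 0 psi) (sub_mat K r 0 i0 psib)"
proof (rule eq_matI)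
  fix i j assume "i < dim_row (Btil (sub_mat r r i0 i0 B) (sub_mat r K i0 0 psi) (sub_mat K r 0 i0 psib))"
    "j < dim_col (Btil (sub_mat r r i0 i0 B) (sub_mat r K i0 0 psi) (sub_mat K r 0 i0 psib))"
  then have "i < r" "j < r"
    by (simp_all add: Btil_def)
  then show "sub_mat r r i0 i0 (Btil B psi psib) $$ (i, j)
      = Btil (sub_mat r r i0 i0 B) (sub_mat r K i0 0 psi) (sub_mat K r 0 i0 psib) $$ (i, j)"
    using assms carrier_matD[OF assms(1)] carrier_matD[OF assms(2)] carrier_matD[OF assms(3)]
    by (simp add: Btil_def index_mult_mat_sum[of psi m K psib m]
        index_mult_mat_sum[of "sub_mat r K i0 0 psi" r K "sub_mat K r 0 i0 psib" r] del: index_mult_mat(1))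
qed (use assms in \<open>simp_all add: Btil_def\<close>)

text \<open>Hypothesis \<open>col\<close> says that above the diagonal the last column of \<open>(B + \<psi>\<psi>\<^sup>-)/2\<close> is that
  of \<open>\<psi>\<psi>\<^sup>-\<close>; this turns the cross terms of \<open>\<psi>\<^sup>- ((B + \<psi>\<psi>\<^sup>-)/2)\<^sup>p \<psi>\<close> into the convolution of the
  coefficients of the two factors.\<close>

lemma iN_Suc_fst_factor:
  fixes B psi psib :: "complex mat"
  assumes B: "B \<in> carrier_mat (Suc n) (Suc n)" and psi: "psi \<in> carrier_mat (Suc n) K"
    and psib: "psib \<in> carrier_mat K (Suc n)"
    and low: "\<forall>j<n. Btil B psi psib $$ (n, j) = 0"
    and col: "\<forall>i<n. B $$ (i, n) = (psi * psib) $$ (i, n)"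
    and "1 \<le> m" "a < K" "b < K"
  shows "fst (iN (Suc n) K B psi psib) m a b
    = fst (mulG K (iN n K (sub_mat n n 0 0 B) (sub_mat n K 0 0 psi) (sub_mat K n 0 0 psib))
                  (iN 1 K (sub_mat 1 1 n n B) (sub_mat 1 K n 0 psi) (sub_mat K 1 0 n psib))) m a b"
proof -
  obtain p where m: "m = Suc p"
    using \<open>1 \<le> m\<close> by (cases m) auto
  let ?Bt = "Btil B psi psib"
  let ?A = "(1/2) \<cdot>\<^sub>m ?Bt"
  let ?A1 = "(1/2) \<cdot>\<^sub>m Btil (sub_mat n n 0 0 B) (sub_mat n K 0 0 psi) (sub_mat K n 0 0 psib)"
  let ?\<alpha> = "?A $$ (n, n)"
  let ?psi1 = "sub_mat n K 0 0 psi" and ?psib1 = "sub_mat K n 0 0 psib"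
  have Bt: "?Bt \<in> carrier_mat (Suc n) (Suc n)"
    using B psi psib by (simp add: Btil_def)
  have Bt1: "sub_mat n n 0 0 ?Bt = Btil (sub_mat n n 0 0 B) ?psi1 ?psib1"
    by (rule sub_mat_Btil[OF B psi psib]) simp
  have Bt2: "sub_mat 1 1 n n ?Bt = Btil (sub_mat 1 1 n n B) (sub_mat 1 K n 0 psi) (sub_mat K 1 0 n psib)"
    by (rule sub_mat_Btil[OF B psi psib]) simp
  have A: "?A \<in> carrier_mat (Suc n) (Suc n)" and A1: "?A1 \<in> carrier_mat n n"
    using Bt by (auto simp: Btil_def)
  have A1A: "\<forall>i<n. \<forall>j<n. ?A1 $$ (i, j) = ?A $$ (i, j)"
    using Bt A1 by (auto simp: Bt1[symmetric])
  have A_low: "\<forall>j<n. ?A $$ (n, j) = 0"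
    using Bt low by simp
  have A_col: "\<forall>l<n. ?A $$ (l, n) = (\<Sum>c<K. psi $$ (l, c) * psib $$ (c, n))"
    using Bt B psi psib col by (auto simp: Btil_def index_mult_mat_sum[OF psi psib] simp del: index_mult_mat(1))
  have last: "fst (iN 1 K (sub_mat 1 1 n n B) (sub_mat 1 K n 0 psi) (sub_mat K 1 0 n psib)) (Suc i) c b
      = psib $$ (c, n) * ?\<alpha> ^ i * psi $$ (n, b)" if "c < K" for i c
  proof -
    have "Btil (sub_mat 1 1 n n B) (sub_mat 1 K n 0 psi) (sub_mat K 1 0 n psib) $$ (0, 0)
        = sub_mat 1 1 n n ?Bt $$ (0, 0)"
      by (simp only: Bt2)
    then show ?thesis
      using fst_iN_1x1[of "sub_mat 1 1 n n B" "sub_mat 1 K n 0 psi" K "sub_mat K 1 0 n psib" "Suc i" c b]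
        that \<open>b < K\<close> Bt by simp
  qed
  have "fst (iN (Suc n) K B psi psib) m a b = (psib * ?A ^\<^sub>m p * psi) $$ (a, b)"
    using assms(6-8) by (simp add: fst_iN m)
  also have "\<dots> = (?psib1 * ?A1 ^\<^sub>m p * ?psi1) $$ (a, b)
     + (\<Sum>k<p. \<Sum>c<K. (?psib1 * ?A1 ^\<^sub>m k * ?psi1) $$ (a, c) * (psib $$ (c, n) * ?\<alpha> ^ (p - 1 - k) * psi $$ (n, b)))
     + psib $$ (a, n) * ?\<alpha> ^ p * psi $$ (n, b)"
    by (rule triple_pow_mat_last_row_zero[OF A A1 A_low A1A psi psib A_col assms(7,8)])
  also have "\<dots> = fst (mulG K (iN n K (sub_mat n n 0 0 B) ?psi1 ?psib1)
                  (iN 1 K (sub_mat 1 1 n n B) (sub_mat 1 K n 0 psi) (sub_mat K 1 0 n psib))) m a b"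
    unfolding m fst_mulG_Suc[OF assms(7,8)]
    using last assms(7,8) by (simp add: fst_iN Suc_diff_Suc)
  finally show ?thesis .
qed

lemma iN_Suc_snd_factor:
  fixes B psi psib :: "complex mat"
  assumes B: "B \<in> carrier_mat (Suc n) (Suc n)" and psi: "psi \<in> carrier_mat (Suc n) K"
    and psib: "psib \<in> carrier_mat K (Suc n)"
    and low: "\<forall>j<n. Btil B psi psib $$ (n, j) = 0"
    and "1 \<le> m"
  shows "snd (iN (Suc n) K B psi psib) m
    = snd (mulG K (iN n K (sub_mat n n 0 0 B) (sub_mat n K 0 0 psi) (sub_mat K n 0 0 psib))
                  (iN 1 K (sub_mat 1 1 n n B) (sub_mat 1 K n 0 psi) (sub_mat K 1 0 n psib))) m"
proof -
  let ?Bt = "Btil B psi psib"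
  let ?Bt1 = "Btil (sub_mat n n 0 0 B) (sub_mat n K 0 0 psi) (sub_mat K n 0 0 psib)"
  let ?Bt2 = "Btil (sub_mat 1 1 n n B) (sub_mat 1 K n 0 psi) (sub_mat K 1 0 n psib)"
  have Bt: "?Bt \<in> carrier_mat (Suc n) (Suc n)"
    using B psi psib by (simp add: Btil_def)
  have Bt1: "sub_mat n n 0 0 ?Bt = ?Bt1" and Bt2: "sub_mat 1 1 n n ?Bt = ?Bt2"
    by (rule sub_mat_Btil[OF B psi psib], simp)+
  have Bt1c: "?Bt1 \<in> carrier_mat n n" and Bt2c: "?Bt2 \<in> carrier_mat 1 1"
    unfolding Btil_def by (rule add_carrier_mat[OF mult_carrier_mat[OF sub_mat_carrier sub_mat_carrier]])+
  have "char_poly ?Bt2 = [:- sub_mat 1 1 n n ?Bt $$ (0, 0), 1:]"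
    unfolding Bt2 using Bt2c by (rule char_poly_1x1)
  then have "char_poly ?Bt = char_poly ?Bt1 * char_poly ?Bt2"
    using char_poly_last_row_zero[OF Bt low] by (simp add: Bt1)
  moreover have "snd (iN (Suc n) K B psi psib) m = ser1 (snd (iN (Suc n) K B psi psib)) m"
    using \<open>1 \<le> m\<close> by (simp add: ser1_def)
  ultimately show ?thesis
    unfolding snd_mulG ser1_snd_iN[OF Bt] ser1_snd_iN[OF Bt1c] ser1_snd_iN[OF Bt2c]
    by (simp add: reflect_poly_mult coeff_mult)
qed

definition triangular_data :: "nat \<Rightarrow> nat \<Rightarrow> complex mat \<Rightarrow> complex mat \<Rightarrow> complex mat \<Rightarrow> bool" where
  "triangular_data n K B psi psib \<longleftrightarrow>
     B \<in> carrier_mat (Suc n) (Suc n) \<and> psi \<in> carrier_mat (Suc n) K \<and> psib \<in> carrier_mat K (Suc n)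
     \<and> (\<forall>j<n. Btil B psi psib $$ (n, j) = 0) \<and> (\<forall>i<n. B $$ (i, n) = (psi * psib) $$ (i, n))"

lemma iN_Suc_factor:
  assumes "triangular_data n K B psi psib"
  shows "same_coords K (iN (Suc n) K B psi psib)
    (mulG K (iN n K (sub_mat n n 0 0 B) (sub_mat n K 0 0 psi) (sub_mat K n 0 0 psib))
            (iN 1 K (sub_mat 1 1 n n B) (sub_mat 1 K n 0 psi) (sub_mat K 1 0 n psib)))"
proof -
  have h: "B \<in> carrier_mat (Suc n) (Suc n)" "psi \<in> carrier_mat (Suc n) K" "psib \<in> carrier_mat K (Suc n)"
    "\<forall>j<n. Btil B psi psib $$ (n, j) = 0" "\<forall>i<n. B $$ (i, n) = (psi * psib) $$ (i, n)"
    using assms by (simp_all add: triangular_data_def)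
  show ?thesis
    unfolding same_coords_def using iN_Suc_fst_factor[OF h] iN_Suc_snd_factor[OF h(1-4)] by blast
qed

section \<open>Products of points of the image of \<open>i\<^sub>1\<close>\<close>

definition imageN :: "nat \<Rightarrow> nat \<Rightarrow> point set" where
  "imageN N K = {iN N K B psi psib | B psi psib.
     B \<in> carrier_mat N N \<and> psi \<in> carrier_mat N K \<and> psib \<in> carrier_mat K N}"

lemma idealJ_eq_vanishing_ideal: "idealJ N K = vanishing_ideal (coordsR K) (imageN N K)"
  unfolding idealJ_def vanishing_ideal_def imageN_def ringR_def by blast

text \<open>The off-diagonal entries of the glued \<open>B\<close> are chosen so that the hypotheses of
  \<open>iN_Suc_factor\<close> hold.\<close>

lemma mulG_iN_iN1:
  fixes B1 psi1 psib1 b2 psi2 psib2 :: "complex mat"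
  assumes "B1 \<in> carrier_mat n n" "psi1 \<in> carrier_mat n K" "psib1 \<in> carrier_mat K n"
    and "b2 \<in> carrier_mat 1 1" "psi2 \<in> carrier_mat 1 K" "psib2 \<in> carrier_mat K 1"
  shows "\<exists>p\<in>imageN (Suc n) K. same_coords K (mulG K (iN n K B1 psi1 psib1) (iN 1 K b2 psi2 psib2)) p"
proof -
  define psi where "psi = mat (Suc n) K (\<lambda>(i, j). if i < n then psi1 $$ (i, j) else psi2 $$ (0, j))"
  define psib where "psib = mat K (Suc n) (\<lambda>(i, j). if j < n then psib1 $$ (i, j) else psib2 $$ (i, 0))"
  define B where "B = mat (Suc n) (Suc n) (\<lambda>(i, j).
      if i < n \<and> j < n then B1 $$ (i, j)
      else if i < n then (\<Sum>c<K. psi1 $$ (i, c) * psib2 $$ (c, 0))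
      else if j < n then - (\<Sum>c<K. psi2 $$ (0, c) * psib1 $$ (c, j))
      else b2 $$ (0, 0))"
  have c: "B \<in> carrier_mat (Suc n) (Suc n)" "psi \<in> carrier_mat (Suc n) K" "psib \<in> carrier_mat K (Suc n)"
    by (simp_all add: B_def psi_def psib_def)
  have pp: "(psi * psib) $$ (i, j) = (\<Sum>c<K. psi $$ (i, c) * psib $$ (c, j))"
    if "i < Suc n" "j < Suc n" for i j
    using index_mult_mat_sum[OF c(2,3) that] .
  have "\<forall>j<n. Btil B psi psib $$ (n, j) = 0"
    using c by (simp add: Btil_def pp del: index_mult_mat(1)) (simp add: B_def psi_def psib_def)
  moreover have "\<forall>i<n. B $$ (i, n) = (psi * psib) $$ (i, n)"
    by (simp add: pp del: index_mult_mat(1)) (simp add: B_def psi_def psib_def)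
  ultimately have tri: "triangular_data n K B psi psib"
    using c by (simp add: triangular_data_def)
  have blocks: "sub_mat n n 0 0 B = B1" "sub_mat n K 0 0 psi = psi1" "sub_mat K n 0 0 psib = psib1"
    "sub_mat 1 1 n n B = b2" "sub_mat 1 K n 0 psi = psi2" "sub_mat K 1 0 n psib = psib2"
    by (rule eq_matI; use assms in \<open>simp add: B_def psi_def psib_def\<close>)+
  have "same_coords K (iN (Suc n) K B psi psib) (mulG K (iN n K B1 psi1 psib1) (iN 1 K b2 psi2 psib2))"
    using iN_Suc_factor[OF tri] unfolding blocks .
  then show ?thesis
    using c unfolding imageN_def by (blast intro: same_coords_sym)
qed

lemma iN_0_same_coords_unitG:
  assumes "psi \<in> carrier_mat 0 K" and "psib \<in> carrier_mat K 0"
  shows "same_coords K (iN 0 K B psi psib) unitG"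
proof -
  have "(psib * ((1/2) \<cdot>\<^sub>m Btil B psi psib) ^\<^sub>m (i - 1) * psi) $$ (a, b) = 0"
    if "a < K" "b < K" for i a b
    using index_mult_mat_triple[OF assms(2) _ assms(1) that, of "((1/2) \<cdot>\<^sub>m Btil B psi psib) ^\<^sub>m (i - 1)"]
      assms by (simp add: Btil_def del: index_mult_mat(1))
  then show ?thesis
    by (simp add: same_coords_def fst_iN unitG_def iN_def)
qed

lemma multN_cong: "(\<And>i. i < n \<Longrightarrow> P i = P' i) \<Longrightarrow> multN K n P = multN K n P'"
  by (induction n) auto

lemma multN_tuples_imageN:
  assumes "P \<in> tuples (imageN 1 K) N"
  shows "\<exists>p\<in>imageN N K. same_coords K (multN K N P) p"
  using assms
proof (induction N)
  case 0
  have "iN 0 K (0\<^sub>m 0 0) (0\<^sub>m 0 K) (0\<^sub>m K 0) \<in> imageN 0 K"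
    unfolding imageN_def by (blast intro: zero_carrier_mat)
  then show ?case
    using iN_0_same_coords_unitG[of "0\<^sub>m 0 K" K "0\<^sub>m K 0"] by (auto intro: same_coords_sym)
next
  case (Suc N)
  then obtain p where "p \<in> imageN N K" and p: "same_coords K (multN K N P) p"
    by (auto simp: tuples_def)
  then obtain B1 psi1 psib1 where c1: "B1 \<in> carrier_mat N N" "psi1 \<in> carrier_mat N K" "psib1 \<in> carrier_mat K N"
    and "p = iN N K B1 psi1 psib1"
    by (auto simp: imageN_def)
  moreover obtain b2 psi2 psib2 where c2: "b2 \<in> carrier_mat 1 1" "psi2 \<in> carrier_mat 1 K" "psib2 \<in> carrier_mat K 1"
    and "P N = iN 1 K b2 psi2 psib2"
    using Suc.prems by (auto simp: tuples_def imageN_def)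
  ultimately have "same_coords K (multN K (Suc N) P) (mulG K (iN N K B1 psi1 psib1) (iN 1 K b2 psi2 psib2))"
    using mulG_same_coords[OF p same_coords_refl] by simp
  with mulG_iN_iN1[OF c1 c2] show ?case
    by (blast intro: same_coords_trans)
qed

section \<open>Density of block-triangular data\<close>

lemma mult_mat_assoc4:
  fixes T psi psib S :: "'a::semiring_0 mat"
  assumes "T \<in> carrier_mat m m" "psi \<in> carrier_mat m K" "psib \<in> carrier_mat K m" "S \<in> carrier_mat m m"
  shows "T * psi * (psib * S) = T * (psi * psib) * S"
  using assms assoc_mult_mat[of T m m psi K "psib * S" m] assoc_mult_mat[of psi m K psib m S m]
    assoc_mult_mat[of T m m "psi * psib" m S m] by simp

lemma Btil_similar:
  fixes B psi psib S T :: "complex mat"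
  assumes "B \<in> carrier_mat m m" "psi \<in> carrier_mat m K" "psib \<in> carrier_mat K m"
    and "S \<in> carrier_mat m m" "T \<in> carrier_mat m m"
  shows "Btil (T * B * S) (T * psi) (psib * S) = T * Btil B psi psib * S"
proof -
  have "T * psi * (psib * S) = T * (psi * psib) * S"
    using assms by (intro mult_mat_assoc4)
  then show ?thesis
    using assms by (simp add: Btil_def add_mult_distrib_mat[of _ m m] mult_add_distrib_mat[of _ m m])
qed

lemma similar_sandwich:
  fixes psib S T Y psi :: "'a::semiring_1 mat"
  assumes "psib \<in> carrier_mat K m" "S \<in> carrier_mat m m" "T \<in> carrier_mat m m"
    and "Y \<in> carrier_mat m m" "psi \<in> carrier_mat m K" and ST: "S * T = 1\<^sub>m m"
  shows "(psib * S) * (T * Y * S) * (T * psi) = psib * Y * psi"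
proof -
  note [simp] = assoc_mult_mat[of _ K m _ m _ m] assoc_mult_mat[of _ K m _ m _ K]
    assoc_mult_mat[of _ m m _ m _ m] assoc_mult_mat[of _ m m _ m _ K]
  have "S * (T * X) = X" if "X \<in> carrier_mat m K" for X
    using assms that assoc_mult_mat[of S m m T m X K] by (simp add: ST)
  then show ?thesis
    using assms by simp
qed

lemma iN_similar:
  fixes B psi psib S T :: "complex mat"
  assumes B: "B \<in> carrier_mat m m" and psi: "psi \<in> carrier_mat m K" and psib: "psib \<in> carrier_mat K m"
    and S: "S \<in> carrier_mat m m" and T: "T \<in> carrier_mat m m"
    and ST: "S * T = 1\<^sub>m m" and TS: "T * S = 1\<^sub>m m"
  shows "iN m K (T * B * S) (T * psi) (psib * S) = iN m K B psi psib"
proof -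
  let ?Bt = "Btil B psi psib"
  have Bt: "?Bt \<in> carrier_mat m m"
    using B psi psib by (simp add: Btil_def)
  have wit: "similar_mat_wit (T * ?Bt * S) ?Bt T S"
    by (rule similar_mat_witI[OF TS ST refl]) (use Bt T S in auto)
  have pow: "(psib * S) * ((1/2) \<cdot>\<^sub>m (T * ?Bt * S)) ^\<^sub>m k * (T * psi) = psib * ((1/2) \<cdot>\<^sub>m ?Bt) ^\<^sub>m k * psi" for k
  proof -
    let ?Y = "((1/2) \<cdot>\<^sub>m ?Bt) ^\<^sub>m k"
    have Y: "?Y \<in> carrier_mat m m"
      using Bt by simp
    have "((1/2) \<cdot>\<^sub>m (T * ?Bt * S)) ^\<^sub>m k = T * ?Y * S"
      using similar_mat_witD(3)[OF refl similar_mat_wit_pow[OF similar_mat_wit_smult[OF wit]]] by simp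
    then show ?thesis
      using similar_sandwich[OF psib S T Y psi ST] by simp
  qed
  have cp: "char_poly (T * ?Bt * S) = char_poly ?Bt"
    by (rule char_poly_similar) (use wit in \<open>auto simp: similar_mat_def\<close>)
  show ?thesis
    unfolding iN_def Btil_similar[OF B psi psib S T] pow cp ..
qed

text \<open>Schur's theorem, applied to the transpose of \<open>B - \<psi>\<psi>\<^sup>-\<close>, makes it lower triangular.\<close>

lemma similar_lower_triangular_diff:
  fixes B psi psib :: "complex mat"
  assumes B: "B \<in> carrier_mat m m" and psi: "psi \<in> carrier_mat m K" and psib: "psib \<in> carrier_mat K m"
  obtains S T where "S \<in> carrier_mat m m" "T \<in> carrier_mat m m" "S * T = 1\<^sub>m m" "T * S = 1\<^sub>m m"
    and "\<And>i j. i < j \<Longrightarrow> j < m \<Longrightarrow> (T * B * S) $$ (i, j) = ((T * psi) * (psib * S)) $$ (i, j)"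
proof -
  define X where "X = B - psi * psib"
  have X: "X \<in> carrier_mat m m"
    unfolding X_def using B psi psib by (simp add: minus_carrier_mat)
  then have XT: "transpose_mat X \<in> carrier_mat m m"
    by simp
  obtain as where "char_poly (transpose_mat X) = (\<Prod>a\<leftarrow>as. [:- a, 1:])"
    using char_poly_factorized[OF XT] by blast
  then obtain U where U: "U \<in> carrier_mat m m" "upper_triangular U" "similar_mat (transpose_mat X) U"
    using schur_decomposition_exists[OF XT] by blast
  then obtain P Q where wit: "similar_mat_wit (transpose_mat X) U P Q"
    unfolding similar_mat_def by blast
  note W = similar_mat_witD2[OF XT wit]
  define T where "T = transpose_mat P"
  define S where "S = transpose_mat Q"
  have Tc: "T \<in> carrier_mat m m" and Sc: "S \<in> carrier_mat m m"
    unfolding T_def S_def using W by auto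
  have ST: "S * T = 1\<^sub>m m" and TS: "T * S = 1\<^sub>m m"
    unfolding S_def T_def using W by (simp_all flip: transpose_mult)
  have "X = S * transpose_mat U * T"
  proof -
    have "X = transpose_mat (P * U * Q)"
      using W(3) by (metis transpose_transpose)
    also have "\<dots> = S * transpose_mat U * T"
      unfolding S_def T_def using W U(1)
      by (simp add: transpose_mult[of P m m "U * Q" m] transpose_mult[of U m m Q m])
    finally show ?thesis .
  qed
  moreover have "T * (S * Z) = Z" if "Z \<in> carrier_mat m m" for Z
    using assoc_mult_mat[of T m m S m Z m] Tc Sc that by (simp add: TS)
  ultimately have TXS: "T * X * S = transpose_mat U"
    using Tc Sc U(1) by (simp add: assoc_mult_mat[of _ m m _ m _ m] TS)
  have diff: "T * X * S = T * B * S - (T * psi) * (psib * S)"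
    unfolding X_def mult_mat_assoc4[OF Tc psi psib Sc] using Tc Sc B psi psib
    by (simp add: mult_minus_distrib_mat[of _ m m] minus_mult_distrib_mat[of _ m m])
  have C: "(T * psi) * (psib * S) \<in> carrier_mat m m"
    using mult_carrier_mat[OF mult_carrier_mat[OF Tc psi] mult_carrier_mat[OF psib Sc]] .
  have "(T * B * S) $$ (i, j) = ((T * psi) * (psib * S)) $$ (i, j)" if ij: "i < j" "j < m" for i j
  proof -
    have "0 = (T * X * S) $$ (i, j)"
      using U(1,2) ij unfolding TXS upper_triangular_def by auto
    also have "\<dots> = (T * B * S) $$ (i, j) - ((T * psi) * (psib * S)) $$ (i, j)"
      unfolding diff using C ij by (intro index_minus_mat(1)) auto
    finally show ?thesis
      by simp
  qed
  with that Sc Tc ST TS show ?thesis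
    by blast
qed

lemma det_add_diag_entry:
  fixes A A' :: "'a::comm_ring_1 mat"
  assumes A: "A \<in> carrier_mat m m" and A': "A' \<in> carrier_mat m m" and k: "k < m"
    and diff: "\<And>i j. i < m \<Longrightarrow> j < m \<Longrightarrow> A' $$ (i, j) = A $$ (i, j) + (if i = k \<and> j = k then d else 0)"
  shows "det A' = det A + d * det (mat_delete A k k)"
proof -
  have delete: "mat_delete A' i k = mat_delete A i k" if "i < m" for i
    by (rule eq_matI) (use A A' diff that in \<open>auto simp: mat_delete_def\<close>)
  have "det A' = (\<Sum>i<m. A' $$ (i, k) * cofactor A' i k)"
    by (rule laplace_expansion_column[OF A' k])
  also have "\<dots> = (\<Sum>i<m. A $$ (i, k) * cofactor A i k + (if i = k then d * cofactor A k k else 0))"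
    by (rule sum.cong[OF refl]) (use diff k delete in \<open>auto simp: cofactor_def distrib_right\<close>)
  also have "\<dots> = det A + d * det (mat_delete A k k)"
    using k by (simp add: sum.distrib laplace_expansion_column[OF A k] cofactor_def)
  finally show ?thesis .
qed

lemma poly_char_poly_add_last_diag:
  fixes Y Y' :: "complex mat"
  assumes Y: "Y \<in> carrier_mat (Suc n) (Suc n)" and Y': "Y' \<in> carrier_mat (Suc n) (Suc n)"
    and diff: "\<And>i j. i < Suc n \<Longrightarrow> j < Suc n \<Longrightarrow> Y' $$ (i, j) = Y $$ (i, j) + (if i = n \<and> j = n then e else 0)"
  shows "poly (char_poly Y') \<rho> = poly (char_poly Y) \<rho> - e * poly (char_poly (sub_mat n n 0 0 Y)) \<rho>"
proof -
  have "det (- char_matrix Y' \<rho>) = det (- char_matrix Y \<rho>) + (- e) * det (mat_delete (- char_matrix Y \<rho>) n n)"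
    by (rule det_add_diag_entry) (use Y Y' diff in \<open>auto simp: char_matrix_def\<close>)
  moreover have "mat_delete (- char_matrix Y \<rho>) n n = - char_matrix (sub_mat n n 0 0 Y) \<rho>"
    by (rule eq_matI) (use Y in \<open>auto simp: mat_delete_def char_matrix_def\<close>)
  ultimately show ?thesis
    using Y Y' by (simp add: char_poly_matrix[of _ "Suc n"] char_poly_matrix[of _ n])
qed

lemma eigenvalue_transpose_sub_mat:
  fixes Y :: "complex mat"
  assumes Y: "Y \<in> carrier_mat (Suc n) (Suc n)" and v: "v \<in> carrier_vec (Suc n)" "v \<noteq> 0\<^sub>v (Suc n)"
    and vn: "v $ n = 0" and ev: "transpose_mat Y *\<^sub>v v = \<rho> \<cdot>\<^sub>v v"
  shows "eigenvalue (transpose_mat (sub_mat n n 0 0 Y)) \<rho>"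
proof -
  define w where "w = vec n (\<lambda>i. v $ i)"
  have "w \<noteq> 0\<^sub>v n"
  proof
    assume w0: "w = 0\<^sub>v n"
    have "v $ i = 0" if "i < Suc n" for i
    proof (cases "i = n")
      case False
      with that have "i < n"
        by simp
      then have "w $ i = v $ i"
        by (simp add: w_def)
      with w0 \<open>i < n\<close> show ?thesis
        by simp
    qed (use vn in simp)
    then show False
      using v by (auto intro: eq_vecI)
  qed
  moreover have "transpose_mat (sub_mat n n 0 0 Y) *\<^sub>v w = \<rho> \<cdot>\<^sub>v w"
  proof (rule eq_vecI)
    fix j assume "j < dim_vec (\<rho> \<cdot>\<^sub>v w)"
    then have j: "j < n"
      by (simp add: w_def)
    have "(transpose_mat (sub_mat n n 0 0 Y) *\<^sub>v w) $ j = (\<Sum>i<Suc n. Y $$ (i, j) * v $ i)"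
      using j vn by (simp add: w_def scalar_prod_def atLeast0LessThan)
    also have "\<dots> = \<rho> * v $ j"
      using arg_cong[OF ev, of "\<lambda>w. w $ j"] j Y v(1) by (simp add: scalar_prod_def atLeast0LessThan)
    finally show "(transpose_mat (sub_mat n n 0 0 Y) *\<^sub>v w) $ j = (\<rho> \<cdot>\<^sub>v w) $ j"
      using j by (simp add: w_def)
  qed (simp add: w_def)
  ultimately show ?thesis
    unfolding eigenvalue_def eigenvector_def by (intro exI[of _ w]) (simp add: w_def)
qed

lemma left_eigenvector_last_nonzero:
  fixes Y :: "complex mat"
  assumes Y: "Y \<in> carrier_mat (Suc n) (Suc n)" and root: "poly (char_poly Y) \<rho> = 0"
    and not_root: "poly (char_poly (sub_mat n n 0 0 Y)) \<rho> \<noteq> 0"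
  obtains v where "v \<in> carrier_vec (Suc n)" "v $ n \<noteq> 0"
    "\<And>j. j < Suc n \<Longrightarrow> (\<Sum>i<Suc n. v $ i * Y $$ (i, j)) = \<rho> * v $ j"
proof -
  have "eigenvalue (transpose_mat Y) \<rho>"
    using root Y by (simp add: eigenvalue_root_char_poly[of _ "Suc n"])
  then obtain v where v: "v \<in> carrier_vec (Suc n)" "v \<noteq> 0\<^sub>v (Suc n)"
    and ev: "transpose_mat Y *\<^sub>v v = \<rho> \<cdot>\<^sub>v v"
    using Y by (auto simp: eigenvalue_def eigenvector_def)
  have "v $ n \<noteq> 0"
  proof
    assume "v $ n = 0"
    then have "eigenvalue (transpose_mat (sub_mat n n 0 0 Y)) \<rho>"
      by (rule eigenvalue_transpose_sub_mat[OF Y v _ ev])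
    then show False
      using not_root by (simp add: eigenvalue_root_char_poly[of _ n] char_poly_transpose_mat[OF sub_mat_carrier])
  qed
  moreover have "(\<Sum>i<Suc n. v $ i * Y $$ (i, j)) = \<rho> * v $ j" if "j < Suc n" for j
    using arg_cong[OF ev, of "\<lambda>w. w $ j"] that Y v(1)
    by (simp add: scalar_prod_def atLeast0LessThan mult.commute)
  ultimately show ?thesis
    using that v(1) by blast
qed

lemma index_mult_mat_unit_row:
  fixes A X :: "'a::semiring_1 mat"
  assumes "A \<in> carrier_mat m m" "X \<in> carrier_mat m p" "i < m" "k < p"
    and "\<And>l. l < m \<Longrightarrow> A $$ (i, l) = (if l = i then 1 else 0)"
  shows "(A * X) $$ (i, k) = X $$ (i, k)"
proof -
  have "(A * X) $$ (i, k) = (\<Sum>l<m. if l = i then X $$ (l, k) else 0)"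
    unfolding index_mult_mat_sum[OF assms(1-4)] by (rule sum.cong) (simp_all add: assms(5))
  with assms(3) show ?thesis
    by simp
qed

lemma index_mult_mat_unit_col:
  fixes A X :: "'a::semiring_1 mat"
  assumes "A \<in> carrier_mat r m" "X \<in> carrier_mat m m" "i < r" "j < m"
    and "\<And>l. l < m \<Longrightarrow> X $$ (l, j) = (if l = j then 1 else 0)"
  shows "(A * X) $$ (i, j) = A $$ (i, j)"
proof -
  have "(A * X) $$ (i, j) = (\<Sum>l<m. if l = j then A $$ (i, l) else 0)"
    unfolding index_mult_mat_sum[OF assms(1-4)] by (rule sum.cong) (simp_all add: assms(5))
  with assms(4) show ?thesis
    by simp
qed

definition last_row_shear :: "nat \<Rightarrow> (nat \<Rightarrow> complex) \<Rightarrow> complex mat" where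
  "last_row_shear n w = mat (Suc n) (Suc n) (\<lambda>(i, k). if i = n then (if k = n then 1 else w k)
     else if k = i then 1 else 0)"

lemma last_row_shear_carrier [simp]: "last_row_shear n w \<in> carrier_mat (Suc n) (Suc n)"
  by (simp add: last_row_shear_def)

lemma index_last_row_shear:
  "i < n \<Longrightarrow> k < Suc n \<Longrightarrow> last_row_shear n w $$ (i, k) = (if k = i then 1 else 0)"
  "k < Suc n \<Longrightarrow> last_row_shear n w $$ (n, k) = (if k = n then 1 else w k)"
  by (simp_all add: last_row_shear_def)

lemma last_row_shear_inverse: "last_row_shear n w * last_row_shear n (\<lambda>k. - w k) = 1\<^sub>m (Suc n)"
proof (rule eq_matI)
  fix i k assume "i < dim_row (1\<^sub>m (Suc n) :: complex mat)" "k < dim_col (1\<^sub>m (Suc n) :: complex mat)"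
  then have i: "i < Suc n" and k: "k < Suc n"
    by auto
  show "(last_row_shear n w * last_row_shear n (\<lambda>k. - w k)) $$ (i, k) = 1\<^sub>m (Suc n) $$ (i, k)"
  proof (cases "i < n")
    case True
    have "(last_row_shear n w * last_row_shear n (\<lambda>k. - w k)) $$ (i, k) = last_row_shear n (\<lambda>k. - w k) $$ (i, k)"
      by (rule index_mult_mat_unit_row[OF last_row_shear_carrier last_row_shear_carrier i k])
        (simp add: index_last_row_shear True)
    then show ?thesis
      using True i k by (simp add: index_last_row_shear)
  next
    case False
    then have "i = n"
      using i by simp
    have "(\<Sum>l<n. last_row_shear n w $$ (n, l) * last_row_shear n (\<lambda>k. - w k) $$ (l, k))
        = (\<Sum>l<n. if l = k then w k else 0)"
      by (rule sum.cong) (use k in \<open>auto simp: index_last_row_shear\<close>)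
    then show ?thesis
      using index_mult_mat_sum[of "last_row_shear n w" "Suc n" "Suc n" _ "Suc n" n k] k \<open>i = n\<close>
      by (auto simp: index_last_row_shear less_Suc_eq)
  qed
qed (simp_all add: last_row_shear_def)

lemma last_row_shear_last_col:
  assumes "W \<in> carrier_mat (Suc n) (Suc n)" and "i < n"
  shows "(last_row_shear n w * W * last_row_shear n w') $$ (i, n) = W $$ (i, n)"
proof -
  have "(last_row_shear n w * W * last_row_shear n w') $$ (i, n) = (last_row_shear n w * W) $$ (i, n)"
    by (rule index_mult_mat_unit_col[OF mult_carrier_mat[OF last_row_shear_carrier assms(1)]
          last_row_shear_carrier])
      (use assms in \<open>auto simp: index_last_row_shear\<close>)
  also have "\<dots> = W $$ (i, n)"
    by (rule index_mult_mat_unit_row[OF last_row_shear_carrier assms(1)])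
      (use assms in \<open>auto simp: index_last_row_shear\<close>)
  finally show ?thesis .
qed

text \<open>The hypothesis says that \<open>(w\<^sub>0, \<dots>, w\<^sub>n\<^sub>-\<^sub>1, 1)\<close>, the last row of the shear, is a left
  eigenvector of \<open>Y\<close>.\<close>

lemma last_row_shear_clears_last_row:
  assumes Y: "Y \<in> carrier_mat (Suc n) (Suc n)" and "j < n"
    and ev: "\<And>l. l < Suc n \<Longrightarrow> (\<Sum>i<n. w i * Y $$ (i, l)) + Y $$ (n, l) = \<rho> * (if l = n then 1 else w l)"
  shows "(last_row_shear n w * Y * last_row_shear n (\<lambda>k. - w k)) $$ (n, j) = 0"
proof -
  let ?S = "last_row_shear n w" and ?S' = "last_row_shear n (\<lambda>k. - w k)"
  have SY: "(?S * Y) $$ (n, l) = \<rho> * ?S $$ (n, l)" if "l < Suc n" for l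
    using index_mult_mat_sum[OF last_row_shear_carrier[of n w] Y lessI that] ev[OF that] that
    by (simp add: index_last_row_shear)
  have "(?S * Y * ?S') $$ (n, j) = \<rho> * (?S * ?S') $$ (n, j)"
    using index_mult_mat_sum[of "?S * Y" "Suc n" "Suc n" ?S' "Suc n" n j]
      index_mult_mat_sum[of ?S "Suc n" "Suc n" ?S' "Suc n" n j] mult_carrier_mat[OF last_row_shear_carrier Y]
      \<open>j < n\<close>
    by (simp add: SY sum_distrib_left distrib_left mult.assoc del: index_mult_mat(1))
  then show ?thesis
    using \<open>j < n\<close> by (simp add: last_row_shear_inverse)
qed

lemma infinite_ratio_values:
  fixes p q :: "'a::field_char_0 poly"
  assumes "q \<noteq> 0" and "degree q < degree p"
  shows "infinite {e. \<exists>\<rho>. poly q \<rho> \<noteq> 0 \<and> poly p \<rho> = e * poly q \<rho>}" (is "infinite ?G")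
proof
  assume fin: "finite ?G"
  have nonzero: "p - Polynomial.smult e q \<noteq> 0" for e
  proof -
    have "coeff (p - Polynomial.smult e q) (degree p) = lead_coeff p"
      using assms(2) by (simp add: coeff_eq_0)
    moreover have "lead_coeff p \<noteq> 0"
      using assms(2) by auto
    ultimately show ?thesis
      by auto
  qed
  have "finite ({\<rho>. poly q \<rho> = 0} \<union> (\<Union>e\<in>?G. {\<rho>. poly (p - Polynomial.smult e q) \<rho> = 0}))"
    using fin poly_roots_finite[OF assms(1)] poly_roots_finite[OF nonzero] by blast
  moreover have "UNIV \<subseteq> {\<rho>. poly q \<rho> = 0} \<union> (\<Union>e\<in>?G. {\<rho>. poly (p - Polynomial.smult e q) \<rho> = 0})"
  proof
    fix \<rho> :: 'a
    show "\<rho> \<in> {\<rho>. poly q \<rho> = 0} \<union> (\<Union>e\<in>?G. {\<rho>. poly (p - Polynomial.smult e q) \<rho> = 0})"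
    proof (cases "poly q \<rho> = 0")
      case False
      then have "poly p \<rho> / poly q \<rho> \<in> ?G" and "poly (p - Polynomial.smult (poly p \<rho> / poly q \<rho>) q) \<rho> = 0"
        by auto
      then show ?thesis
        by blast
    qed simp
  qed
  ultimately show False
    using finite_subset infinite_UNIV_char_0 by blast
qed

lemma polyfun_range_poly: "g \<in> polyfun (range poly) \<Longrightarrow> \<exists>p. g = poly p"
proof (induction rule: polyfun.induct)
  case (pf_const c)
  show ?case
    by (rule exI[of _ "[:c:]"]) auto
next
  case (pf_add f g)
  then obtain p q where "f = poly p" "g = poly q"
    by blast
  then show ?case
    by (intro exI[of _ "p + q"]) auto
next
  case (pf_mult f g)
  then obtain p q where "f = poly p" "g = poly q"
    by blast
  then show ?case
    by (intro exI[of _ "p * q"]) auto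
qed auto

text \<open>Along a line \<open>B + e E\<close> every coordinate of \<open>i\<^sub>m\<close> is a polynomial in \<open>e\<close>: evaluate the
  same expressions over the polynomial ring and substitute \<open>e\<close> afterwards.\<close>

lemma iN_line_polynomial:
  fixes B E psi psib :: "complex mat"
  assumes f: "f \<in> ringR K" and B: "B \<in> carrier_mat m m" and E: "E \<in> carrier_mat m m"
    and psi: "psi \<in> carrier_mat m K" and psib: "psib \<in> carrier_mat K m"
  obtains p where "\<And>e. f (iN m K (B + e \<cdot>\<^sub>m E) psi psib) = poly p e"
proof -
  define cst where "cst x = [:x:]" for x :: complex
  define Mp where "Mp = map_mat cst (Btil B psi psib) + [:0, 1:] \<cdot>\<^sub>m map_mat cst E"
  define psip where "psip = map_mat cst psi"
  define psibp where "psibp = map_mat cst psib"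
  have Mp: "Mp \<in> carrier_mat m m" and psip: "psip \<in> carrier_mat m K" and psibp: "psibp \<in> carrier_mat K m"
    using B E psi psib by (auto simp: Mp_def psip_def psibp_def Btil_def)
  have sh: "semiring_hom (\<lambda>p::complex poly. poly p e)" and ch: "comm_ring_hom (\<lambda>p::complex poly. poly p e)" for e
    by unfold_locales auto
  have Bt: "map_mat (\<lambda>p. poly p e) Mp = Btil (B + e \<cdot>\<^sub>m E) psi psib" for e
    by (rule eq_matI) (use B E psi psib in \<open>auto simp: Mp_def Btil_def cst_def algebra_simps\<close>)
  have half: "(1/2) \<cdot>\<^sub>m map_mat (\<lambda>p. poly p e) Mp = map_mat (\<lambda>p. poly p e) ([:1/2:] \<cdot>\<^sub>m Mp)" for e
    by (rule eq_matI) auto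
  have vectors: "map_mat (\<lambda>p. poly p e) psip = psi" "map_mat (\<lambda>p. poly p e) psibp = psib" for e
    by (rule eq_matI, auto simp: psip_def psibp_def cst_def)+
  have H: "[:1/2:] \<cdot>\<^sub>m Mp \<in> carrier_mat m m"
    using Mp by simp
  have fst_poly: "(\<lambda>e. fst (iN m K (B + e \<cdot>\<^sub>m E) psi psib) i a b) \<in> range poly"
    if "1 \<le> i" "a < K" "b < K" for i a b
  proof -
    let ?X = "psibp * ([:1/2:] \<cdot>\<^sub>m Mp) ^\<^sub>m (i - 1) * psip"
    have X: "?X \<in> carrier_mat K K"
      using mult_carrier_mat[OF mult_carrier_mat[OF psibp pow_carrier_mat[OF H]] psip] .
    have "psib * ((1/2) \<cdot>\<^sub>m Btil (B + e \<cdot>\<^sub>m E) psi psib) ^\<^sub>m (i - 1) * psi = map_mat (\<lambda>p. poly p e) ?X" for e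
      unfolding Bt[symmetric] half
      by (simp add: semiring_hom.mat_hom_mult[OF sh mult_carrier_mat[OF psibp pow_carrier_mat[OF H]] psip]
          semiring_hom.mat_hom_mult[OF sh psibp pow_carrier_mat[OF H]] semiring_hom.mat_hom_pow[OF sh H]
          vectors)
    then have "fst (iN m K (B + e \<cdot>\<^sub>m E) psi psib) i a b = poly (?X $$ (a, b)) e" for e
      using that by (simp add: fst_iN carrier_matD[OF psibp] carrier_matD[OF psip])
    then show ?thesis
      by (auto intro: range_eqI[where x="?X $$ (a, b)"])
  qed
  have snd_poly: "(\<lambda>e. snd (iN m K (B + e \<cdot>\<^sub>m E) psi psib) i) \<in> range poly" for i
  proof -
    have "char_poly (Btil (B + e \<cdot>\<^sub>m E) psi psib) = map_poly (\<lambda>p. poly p e) (char_poly Mp)" for e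
      unfolding Bt[symmetric] by (rule comm_ring_hom.char_poly_hom[OF ch Mp])
    then have "snd (iN m K (B + e \<cdot>\<^sub>m E) psi psib) i
        = poly (if i \<le> m then coeff (char_poly Mp) (m - i) else 0) e" for e
      by (simp add: iN_def coeff_map_poly)
    then show ?thesis
      by (auto intro: range_eqI[where x="if i \<le> m then coeff (char_poly Mp) (m - i) else 0"])
  qed
  have "polynomial_map K (range poly) (\<lambda>e. iN m K (B + e \<cdot>\<^sub>m E) psi psib)"
    unfolding polynomial_map_def using fst_poly snd_poly by (auto intro: polyfun.pf_coord)
  then show ?thesis
    using polyfun_range_poly[OF ringR_compose[OF f]] that by metis
qed

lemma vanishes_after_corner_perturbation:
  fixes B B' psi psib :: "complex mat"
  assumes good: "\<And>B psi psib. triangular_data n K B psi psib \<Longrightarrow> f (iN (Suc n) K B psi psib) = 0"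
    and B: "B \<in> carrier_mat (Suc n) (Suc n)" and psi: "psi \<in> carrier_mat (Suc n) K"
    and psib: "psib \<in> carrier_mat K (Suc n)"
    and col: "\<forall>i<n. B $$ (i, n) = (psi * psib) $$ (i, n)"
    and B': "B' \<in> carrier_mat (Suc n) (Suc n)"
    and diff: "\<And>i j. i < Suc n \<Longrightarrow> j < Suc n \<Longrightarrow> B' $$ (i, j) = B $$ (i, j) + (if i = n \<and> j = n then e else 0)"
    and not_root: "poly (char_poly (sub_mat n n 0 0 (Btil B psi psib))) \<rho> \<noteq> 0"
    and ratio: "poly (char_poly (Btil B psi psib)) \<rho> = e * poly (char_poly (sub_mat n n 0 0 (Btil B psi psib))) \<rho>"
  shows "f (iN (Suc n) K B' psi psib) = 0"
proof -
  let ?Bt = "Btil B psi psib" and ?Bt' = "Btil B' psi psib"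
  have Bt: "?Bt \<in> carrier_mat (Suc n) (Suc n)" and Bt': "?Bt' \<in> carrier_mat (Suc n) (Suc n)"
    using B B' psi psib by (simp_all add: Btil_def)
  have diff': "?Bt' $$ (i, j) = ?Bt $$ (i, j) + (if i = n \<and> j = n then e else 0)"
    if "i < Suc n" "j < Suc n" for i j
    using that diff B B' psi psib by (simp add: Btil_def)
  have sub: "sub_mat n n 0 0 ?Bt' = sub_mat n n 0 0 ?Bt"
    by (rule eq_matI) (simp_all add: diff')
  have root: "poly (char_poly ?Bt') \<rho> = 0"
    using poly_char_poly_add_last_diag[OF Bt Bt' diff'] ratio by simp
  have "poly (char_poly (sub_mat n n 0 0 ?Bt')) \<rho> \<noteq> 0"
    unfolding sub by (rule not_root)
  then obtain v where vn: "v $ n \<noteq> 0"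
    and ev: "\<And>j. j < Suc n \<Longrightarrow> (\<Sum>i<Suc n. v $ i * ?Bt' $$ (i, j)) = \<rho> * v $ j"
    using left_eigenvector_last_nonzero[OF Bt' root] by blast
  define w where "w k = v $ k / v $ n" for k
  let ?S = "last_row_shear n w" and ?S' = "last_row_shear n (\<lambda>k. - w k)"
  have S: "?S \<in> carrier_mat (Suc n) (Suc n)" and S': "?S' \<in> carrier_mat (Suc n) (Suc n)"
    by simp_all
  have inv: "?S * ?S' = 1\<^sub>m (Suc n)" "?S' * ?S = 1\<^sub>m (Suc n)"
    using last_row_shear_inverse[of n w] last_row_shear_inverse[of n "\<lambda>k. - w k"] by simp_all
  have ev': "(\<Sum>i<n. w i * ?Bt' $$ (i, l)) + ?Bt' $$ (n, l) = \<rho> * (if l = n then 1 else w l)"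
    if "l < Suc n" for l
  proof -
    have "(\<Sum>i<n. w i * ?Bt' $$ (i, l)) + ?Bt' $$ (n, l) = (\<Sum>i<Suc n. v $ i * ?Bt' $$ (i, l)) / v $ n"
      using vn by (simp add: w_def sum_divide_distrib add_divide_distrib)
    then show ?thesis
      using ev[OF that] vn by (simp add: w_def)
  qed
  have "f (iN (Suc n) K (?S * B' * ?S') (?S * psi) (psib * ?S')) = 0"
  proof (rule good, unfold triangular_data_def, intro conjI)
    show "\<forall>j<n. Btil (?S * B' * ?S') (?S * psi) (psib * ?S') $$ (n, j) = 0"
      using last_row_shear_clears_last_row[OF Bt' _ ev'] by (simp add: Btil_similar[OF B' psi psib S' S])
    have "(?S * B' * ?S') $$ (i, n) = ((?S * psi) * (psib * ?S')) $$ (i, n)" if "i < n" for i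
    proof -
      have "(?S * B' * ?S') $$ (i, n) = B $$ (i, n)"
        using last_row_shear_last_col[OF B' that] diff[of i n] that by simp
      also have "\<dots> = (?S * (psi * psib) * ?S') $$ (i, n)"
        using col last_row_shear_last_col[of "psi * psib" n i] psi psib that by simp
      finally show ?thesis
        by (simp add: mult_mat_assoc4[OF S psi psib S'])
    qed
    then show "\<forall>i<n. (?S * B' * ?S') $$ (i, n) = ((?S * psi) * (psib * ?S')) $$ (i, n)"
      by blast
  qed (use B' psi psib in \<open>auto intro!: mult_carrier_mat\<close>)
  then show ?thesis
    by (simp add: iN_similar[OF B' psi psib S' S inv(2,1)])
qed

text \<open>The hypothesis on the last row of \<open>B + \<psi>\<psi>\<^sup>-\<close> holds after generic corner perturbations,
  and the value of \<open>f\<close> is a polynomial in the perturbation, so it vanishes at \<open>0\<close> as well.\<close>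

lemma vanishes_on_iN_Suc_last_col:
  fixes B psi psib :: "complex mat"
  assumes f: "f \<in> ringR K"
    and good: "\<And>B psi psib. triangular_data n K B psi psib \<Longrightarrow> f (iN (Suc n) K B psi psib) = 0"
    and B: "B \<in> carrier_mat (Suc n) (Suc n)" and psi: "psi \<in> carrier_mat (Suc n) K"
    and psib: "psib \<in> carrier_mat K (Suc n)"
    and col: "\<forall>i<n. B $$ (i, n) = (psi * psib) $$ (i, n)"
  shows "f (iN (Suc n) K B psi psib) = 0"
proof -
  define E :: "complex mat" where "E = mat (Suc n) (Suc n) (\<lambda>(i, j). if i = n \<and> j = n then 1 else 0)"
  have E: "E \<in> carrier_mat (Suc n) (Suc n)"
    by (simp add: E_def)
  let ?Bt = "Btil B psi psib"
  let ?M = "sub_mat n n 0 0 ?Bt"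
  have Bt: "?Bt \<in> carrier_mat (Suc n) (Suc n)"
    using B psi psib by (simp add: Btil_def)
  define G where "G = {e. \<exists>\<rho>. poly (char_poly ?M) \<rho> \<noteq> 0 \<and> poly (char_poly ?Bt) \<rho> = e * poly (char_poly ?M) \<rho>}"
  have "infinite G"
    unfolding G_def using degree_monic_char_poly[OF Bt] degree_monic_char_poly[of ?M n]
    by (intro infinite_ratio_values) auto
  obtain p where p: "\<And>e. f (iN (Suc n) K (B + e \<cdot>\<^sub>m E) psi psib) = poly p e"
    using iN_line_polynomial[OF f B E psi psib] by blast
  have "poly p e = 0" if "e \<in> G" for e
  proof -
    obtain \<rho> where "poly (char_poly ?M) \<rho> \<noteq> 0" "poly (char_poly ?Bt) \<rho> = e * poly (char_poly ?M) \<rho>"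
      using \<open>e \<in> G\<close> by (auto simp: G_def)
    moreover have "B + e \<cdot>\<^sub>m E \<in> carrier_mat (Suc n) (Suc n)"
      using B E by simp
    moreover have "(B + e \<cdot>\<^sub>m E) $$ (i, j) = B $$ (i, j) + (if i = n \<and> j = n then e else 0)"
      if "i < Suc n" "j < Suc n" for i j
      using that B E by (simp add: E_def)
    ultimately have "f (iN (Suc n) K (B + e \<cdot>\<^sub>m E) psi psib) = 0"
      by (intro vanishes_after_corner_perturbation[where f = f and K = K and n = n, OF good B psi psib col])
    then show ?thesis
      by (simp add: p)
  qed
  then have "p = 0"
    using \<open>infinite G\<close> poly_roots_finite[of p] by (meson finite_subset mem_Collect_eq subsetI)
  moreover have "B + 0 \<cdot>\<^sub>m E = B"
    by (rule eq_matI) (use B E in auto)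
  ultimately show ?thesis
    using p[of 0] by simp
qed

lemma vanishes_on_iN_Suc:
  fixes B psi psib :: "complex mat"
  assumes f: "f \<in> ringR K"
    and good: "\<And>B psi psib. triangular_data n K B psi psib \<Longrightarrow> f (iN (Suc n) K B psi psib) = 0"
    and B: "B \<in> carrier_mat (Suc n) (Suc n)" and psi: "psi \<in> carrier_mat (Suc n) K"
    and psib: "psib \<in> carrier_mat K (Suc n)"
  shows "f (iN (Suc n) K B psi psib) = 0"
proof -
  obtain S T where S: "S \<in> carrier_mat (Suc n) (Suc n)" and T: "T \<in> carrier_mat (Suc n) (Suc n)"
    and ST: "S * T = 1\<^sub>m (Suc n)" and TS: "T * S = 1\<^sub>m (Suc n)"
    and lower: "\<And>i j. i < j \<Longrightarrow> j < Suc n \<Longrightarrow> (T * B * S) $$ (i, j) = ((T * psi) * (psib * S)) $$ (i, j)"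
    using similar_lower_triangular_diff[OF B psi psib] by blast
  have "f (iN (Suc n) K (T * B * S) (T * psi) (psib * S)) = 0"
    by (rule vanishes_on_iN_Suc_last_col[OF f good]) (use B psi psib S T lower in auto)
  then show ?thesis
    by (simp add: iN_similar[OF B psi psib S T ST TS])
qed

lemma vanishes_on_imageN:
  assumes "f \<in> ringR K" and "\<forall>P\<in>tuples (imageN 1 K) N. f (multN K N P) = 0"
    and "B \<in> carrier_mat N N" "psi \<in> carrier_mat N K" "psib \<in> carrier_mat K N"
  shows "f (iN N K B psi psib) = 0"
  using assms
proof (induction N arbitrary: f B psi psib)
  case 0
  have "iN 1 K (0\<^sub>m 1 1) (0\<^sub>m 1 K) (0\<^sub>m K 1) \<in> imageN 1 K"
    unfolding imageN_def by (blast intro: zero_carrier_mat)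
  then have "f (multN K 0 (\<lambda>_. iN 1 K (0\<^sub>m 1 1) (0\<^sub>m 1 K) (0\<^sub>m K 1))) = 0"
    using 0 by (simp add: tuples_def)
  then show ?case
    using ringR_same_coords[OF 0(1) iN_0_same_coords_unitG[OF 0(4,5)]] by simp
next
  case (Suc n)
  have step: "f (mulG K (iN n K B1 psi1 psib1) q) = 0"
    if q: "q \<in> imageN 1 K" and "B1 \<in> carrier_mat n n" "psi1 \<in> carrier_mat n K" "psib1 \<in> carrier_mat K n"
    for q B1 psi1 psib1
  proof -
    have "\<forall>P\<in>tuples (imageN 1 K) n. f (mulG K (multN K n P) q) = 0"
    proof
      fix P assume P: "P \<in> tuples (imageN 1 K) n"
      have "P(n := q) \<in> tuples (imageN 1 K) (Suc n)"
        using P q by (simp add: tuples_def)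
      moreover have "multN K (Suc n) (P(n := q)) = mulG K (multN K n P) q"
        using multN_cong[of n "P(n := q)" P] by simp
      ultimately show "f (mulG K (multN K n P) q) = 0"
        using Suc.prems(2) by metis
    qed
    then show ?thesis
      using Suc.IH[OF ringR_mulG_right[OF Suc.prems(1)]] that by blast
  qed
  then show ?case
  proof (intro vanishes_on_iN_Suc[OF Suc.prems(1) _ Suc.prems(3-5)])
    fix B psi psib :: "complex mat"
    assume "triangular_data n K B psi psib"
    then have "f (iN (Suc n) K B psi psib)
      = f (mulG K (iN n K (sub_mat n n 0 0 B) (sub_mat n K 0 0 psi) (sub_mat K n 0 0 psib))
            (iN 1 K (sub_mat 1 1 n n B) (sub_mat 1 K n 0 psi) (sub_mat K 1 0 n psib)))"
      by (intro ringR_same_coords[OF Suc.prems(1)] iN_Suc_factor)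
    moreover have "iN 1 K (sub_mat 1 1 n n B) (sub_mat 1 K n 0 psi) (sub_mat K 1 0 n psib) \<in> imageN 1 K"
      unfolding imageN_def by (blast intro: sub_mat_carrier)
    ultimately show "f (iN (Suc n) K B psi psib) = 0"
      using step by simp
  qed
qed

lemma vanishes_on_products_iff:
  assumes "f \<in> ringR K"
  shows "(\<forall>P\<in>tuples (imageN 1 K) N. f (multN K N P) = 0) \<longleftrightarrow> (\<forall>p\<in>imageN N K. f p = 0)"
proof
  assume "\<forall>P\<in>tuples (imageN 1 K) N. f (multN K N P) = 0"
  then show "\<forall>p\<in>imageN N K. f p = 0"
    using vanishes_on_imageN[OF assms] by (auto simp: imageN_def)
next
  assume "\<forall>p\<in>imageN N K. f p = 0"
  then show "\<forall>P\<in>tuples (imageN 1 K) N. f (multN K N P) = 0"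
    using multN_tuples_imageN ringR_same_coords[OF assms] by metis
qed

lemma sumJ1_eq_vanishing_ideal: "sumJ1 K N = vanishing_ideal (coordsN K N) (tuples (imageN 1 K) N)"
proof -
  have "coordsN K N = slot_coords (coordsR K) 0 N"
    by (simp add: coordsN_def slot_coords_def)
  moreover have "imageN 1 K \<noteq> {}"
    unfolding imageN_def by (blast intro: zero_carrier_mat)
  ultimately show ?thesis
    using vanishing_ideal_tuples[of "imageN 1 K" "coordsR K" N]
    by (simp add: sumJ1_def slot_ideal_def ringRN_def idealJ_eq_vanishing_ideal)
qed

theorem mainTheorem17:
  fixes N K :: nat
  shows "idealJ N K = {f \<in> ringR K. DeltaN K N f \<in> sumJ1 K N}"
proof -
  have "DeltaN K N f \<in> sumJ1 K N \<longleftrightarrow> (\<forall>p\<in>imageN N K. f p = 0)" if "f \<in> ringR K" for f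
    using DeltaN_ringRN[OF that] vanishes_on_products_iff[OF that]
    by (simp add: sumJ1_eq_vanishing_ideal vanishing_ideal_def ringRN_def DeltaN_def)
  then show ?thesis
    by (auto simp: idealJ_eq_vanishing_ideal vanishing_ideal_def ringR_def)
qed

end
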